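(* In the setting described in the context, \[ \mathbb{E}\bigg[\mathbf{1}\{\omega(n_{<x})=r\}\max_{y\in\mathcal{Y}}\frac{\tau(n_{<y})}{\operatorname{Log} y}\bigg]\gg 1. \]
   Context: Notation: $\operatorname{Log} x\coloneqq\max\{1,\log x\}$, $\operatorname{Log}_2 x\coloneqq\operatorname{Log}(\operatorname{Log} x)$; $\omega(n)$ = number of distinct prime factors, $\tau(n)$ = number of divisors. Random model: for each prime $p$, $n_p$ equals $1$ with probability $\frac{p}{p+1}$ and $p$ with probability $\frac1{p+1}$, independently over $p$; $n_{<z}\coloneqq\prod_{p<z}n_p$. Setting: $\varepsilon>0$ is fixed, $x$ is sufficiently large in terms of $\varepsilon$, $r$ is an integer with $(1+\varepsilon)\operatorname{Log}_2 x\le r\le(2-\varepsilon)\operatorname{Log}_2 x$, and $\alpha$ is defined by $r=(1+\alpha)\operatorname{Log}_2 x$. Let $\mathcal{Y}\coloneqq\{y>0: |\operatorname{Log}_2 y-\alpha\operatorname{Log}_2 x|\le\sqrt{\operatorname{Log}_2 x},\ \operatorname{Log}_2 y/\log 2\in\mathbb{Z}\}$. Implied constants may depend on $\varepsilon$. *)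

theory Defs
  imports "HOL-Probability.Probability" "HOL-Computational_Algebra.Primes"
begin

definition Log :: "real \<Rightarrow> real" where
  "Log x = max 1 (ln x)"

definition Log2 :: "real \<Rightarrow> real" where
  "Log2 x = Log (Log x)"

definition omega :: "nat \<Rightarrow> nat" where
  "omega n = card (prime_factors n)"

definition tau :: "nat \<Rightarrow> nat" where
  "tau n = card {d. d dvd n}"

definition np_pmf :: "nat \<Rightarrow> nat pmf" where
  "np_pmf p = map_pmf (\<lambda>b. if b then p else 1) (bernoulli_pmf (1 / (real p + 1)))"

definition model :: "(nat \<Rightarrow> nat) measure" where
  "model = (\<Pi>\<^sub>M p\<in>{p. prime p}. measure_pmf (np_pmf p))"

definition n_lt :: "(nat \<Rightarrow> nat) \<Rightarrow> real \<Rightarrow> nat" where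
  "n_lt w z = (\<Prod>p\<in>{p. prime p \<and> real p < z}. w p)"

definition Yset :: "real \<Rightarrow> real \<Rightarrow> real set" where
  "Yset x \<alpha> = {y. y > 0 \<and> \<bar>Log2 y - \<alpha> * Log2 x\<bar> \<le> sqrt (Log2 x)
                 \<and> Log2 y / ln 2 \<in> \<int>}"

end

(*
  Condition on the set A of primes p < x with n_p = p. Then n_{<y} is the product of the primes of A
  below y, so omega (n_{<x}) = |A| and tau (n_{<y}) = 2^|A cap [2, y)|, and A occurs with probability
  prod_{p<x} (1 + 1/p)^-1 * prod_{p in A} 1/p.

  The points of Y are y_k = exp (2^k) for k in a window K of about sqrt (Log_2 x) integers around
  alpha Log_2 x / log 2. Write a_k(A) = 2^|A cap [2, y_k)| / Log y_k. As
  (sum_k a_k)^2 <= max_k a_k * sum_{j,k} sqrt (a_j a_k), the maximum is at least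
  2 lam sum_k a_k - lam^2 sum_{j,k} sqrt (a_j a_k) for every lam >= 0, and the expectation of this
  over r-element sets A is a combination of elementary symmetric functions e_r of weights c_p / p.
  The Maclaurin-type bounds (sum_{p >= 65} c_p / p)^r / 2 <= r! e_r <= (sum_p c_p / p)^r and
  Mertens' estimate sum_{p<z} 1/p = log log z + O(1) show that every linear term is >> V, where
  V = r^r / r! * exp (-alpha Log_2 x), while the cross term (j, k) is << V 2^((sqrt 2 - 3/2) |j - k|).
  A suitable lam then gives the lower bound >> |K| V, and |K| >> sqrt r compensates the factor
  sqrt r lost in r^r / r! >= e^(r-1) / sqrt r.
*)

theory Submission
  imports Defs "HOL-Number_Theory.Prime_Powers"
begin

section \<open>Mertens' estimates\<close>

lemma card_multiples_atLeastAtMost: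
  assumes "d > (0::nat)"
  shows "card {m\<in>{1..n}. d dvd m} = n div d"
proof -
  have "{m\<in>{1..n}. d dvd m} = (\<lambda>k. d*k) ` {1..n div d}"
  proof (intro equalityI subsetI)
    fix m assume "m \<in> {m\<in>{1..n}. d dvd m}"
    then obtain k where k: "m = d*k" "1 \<le> m" "m \<le> n" by auto
    then have "k \<ge> 1" by (cases k) auto
    moreover have "k \<le> n div d" using k assms
      by (metis div_le_mono nonzero_mult_div_cancel_left not_gr0)
    ultimately show "m \<in> (\<lambda>k. d*k) ` {1..n div d}" using k by auto
  next
    fix m assume "m \<in> (\<lambda>k. d*k) ` {1..n div d}"
    then obtain k where "k \<in> {1..n div d}" "m = d*k" by blast
    then have k: "m = d*k" "1 \<le> k" "k \<le> n div d" by auto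
    have "d * k \<le> d * (n div d)" using k by simp
    also have "\<dots> \<le> n" by simp
    finally show "m \<in> {m\<in>{1..n}. d dvd m}" using k assms by auto
  qed
  moreover have "inj_on (\<lambda>k. d*k) {1..n div d}" using assms by (auto simp: inj_on_def)
  ultimately show ?thesis by (simp add: card_image)
qed

lemma ln_fact_eq_sum_mangoldt:
  "ln (fact n :: real) = (\<Sum>d=1..n. mangoldt d * real (n div d))"
proof -
  have divisors: "{d. d dvd m} = {d\<in>{1..n}. d dvd m}" if "m \<in> {1..n}" for m
    using that by (auto dest: dvd_imp_le intro: dvd_pos_nat)
  have "ln (fact n :: real) = (\<Sum>m=1..n. ln (real m))"
    by (simp add: fact_prod, subst ln_prod) auto
  also have "\<dots> = (\<Sum>m=1..n. \<Sum>d\<in>{d\<in>{1..n}. d dvd m}. mangoldt d)"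
  proof (intro sum.cong refl)
    fix m assume m: "m \<in> {1..n}"
    then have "ln (real m) = (\<Sum>d | d dvd m. mangoldt d)" by (simp add: mangoldt_sum)
    also have "\<dots> = (\<Sum>d\<in>{d\<in>{1..n}. d dvd m}. mangoldt d)" by (simp only: divisors[OF m])
    finally show "ln (real m) = (\<Sum>d\<in>{d\<in>{1..n}. d dvd m}. mangoldt d)" .
  qed
  also have "\<dots> = (\<Sum>d=1..n. \<Sum>m\<in>{m\<in>{1..n}. d dvd m}. mangoldt d)"
    by (rule sum.swap_restrict) simp_all
  also have "\<dots> = (\<Sum>d=1..n. mangoldt d * real (n div d))"
    by (intro sum.cong refl) (use card_multiples_atLeastAtMost in auto)
  finally show ?thesis .
qed

lemma ln_one_plus_ge:
  fixes u :: real
  assumes "u \<ge> 0"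
  shows "2*u/(2+u) \<le> ln (1+u)"
proof -
  let ?f = "\<lambda>t::real. ln (1+t) - 2*t/(2+t)"
  have "?f 0 \<le> ?f u"
  proof (rule DERIV_nonneg_imp_nondecreasing[OF assms])
    fix t :: real assume t: "0 \<le> t" "t \<le> u"
    have "(?f has_real_derivative (1/(1+t) - (2*(2+t) - 2*t)/(2+t)^2)) (at t)"
      using t by (auto intro!: derivative_eq_intros simp: power2_eq_square)
    moreover have "(2+t)^2 \<ge> 4*(1+t)" by (simp add: power2_eq_square algebra_simps)
    then have "1/(1+t) - (2*(2+t) - 2*t)/(2+t)^2 \<ge> 0" using t
      by (simp add: divide_simps)
    ultimately show "\<exists>y. (?f has_real_derivative y) (at t) \<and> y \<ge> 0" by blast
  qed
  then show ?thesis by simp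
qed

lemma ln_Suc_diff_ge:
  assumes "n \<ge> (1::nat)"
  shows "1 \<le> (real n + 1/2) * (ln (real n + 1) - ln (real n))"
proof -
  have n: "real n > 0" using assms by simp
  have "1 + 1/real n = (real n + 1)/real n" using n by (simp add: field_simps)
  then have "ln (real n + 1) - ln (real n) = ln (1 + 1/real n)"
    using n by (simp add: ln_div)
  moreover have "2*(1/real n)/(2+1/real n) \<le> ln (1 + 1/real n)"
    by (rule ln_one_plus_ge) simp
  moreover have "2*(1/real n)/(2+1/real n) = 1 / (real n + 1/2)"
    using n by (simp add: field_simps)
  ultimately show ?thesis using n by (simp add: field_simps)
qed

lemma ln_Suc_diff_le:
  assumes "n \<ge> (1::nat)"
  shows "real n * (ln (real n + 1) - ln (real n)) \<le> 1"
proof -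
  have n: "real n > 0" using assms by simp
  have "ln (real n + 1) - ln (real n) = ln ((real n + 1) / real n)"
    using n by (subst ln_div) auto
  also have "\<dots> \<le> (real n + 1) / real n - 1" by (rule ln_le_minus_one) (use n in simp)
  also have "\<dots> = 1 / real n" using n by (simp add: field_simps)
  finally show ?thesis using n by (simp add: field_simps)
qed

lemma ln_fact_ge:
  assumes "n \<ge> (1::nat)"
  shows "real n * ln (real n) - real n \<le> ln (fact n :: real)"
  using assms
proof (induction n rule: dec_induct)
  case (step n)
  have "ln (fact (Suc n) :: real) = ln (real n + 1) + ln (fact n)"
    by (simp add: ln_mult add.commute)
  then show ?case using step ln_Suc_diff_le[of n] by (simp add: algebra_simps)
qed simp

lemma ln_fact_le_stirling:
  assumes "n \<ge> (1::nat)"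
  shows "ln (fact n :: real) + real n \<le> 1 + ln (real n) / 2 + real n * ln (real n)"
  using assms
proof (induction n rule: dec_induct)
  case (step n)
  have "ln (fact (Suc n) :: real) = ln (real n + 1) + ln (fact n)"
    by (simp add: ln_mult add.commute)
  then show ?case using step ln_Suc_diff_ge[of n] by (simp add: algebra_simps)
qed simp

lemma ln_fact_le: "ln (fact n :: real) \<le> real n * ln (real n)"
proof (cases "n = 0")
  case False
  have "ln (fact n :: real) \<le> ln (real (n^n))"
    using fact_le_power[of n, where 'a=real] False by (subst ln_le_cancel_iff) auto
  also have "\<dots> = real n * ln (real n)" using False by (simp add: ln_realpow)
  finally show ?thesis .
qed simp

lemma ln_fact_double_le: "ln (fact (2*n) :: real) - 2 * ln (fact n) \<le> 2 * real n * ln 2"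
proof -
  have "fact n * fact n * ((2*n) choose n) = (fact (2*n) :: nat)"
    using binomial_fact_lemma[of n "2*n"] by simp
  then have "(fact (2*n) :: real) = fact n * fact n * real ((2*n) choose n)"
    by (metis (mono_tags, lifting) of_nat_fact of_nat_mult)
  then have "ln (fact (2*n) :: real) - 2 * ln (fact n) = ln (real ((2*n) choose n))"
    by (simp add: ln_mult)
  also have "\<dots> \<le> ln (2 ^ (2*n))"
    using binomial_le_pow2[of "2*n" n]
    by (subst ln_le_cancel_iff) (auto simp del: of_nat_power simp: of_nat_le_iff[symmetric])
  also have "\<dots> = 2 * real n * ln 2" by (simp add: ln_realpow)
  finally show ?thesis .
qed

definition cheb_psi :: "nat \<Rightarrow> real" where
  "cheb_psi n = (\<Sum>d=1..n. mangoldt d)"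

lemma cheb_psi_mono: "m \<le> n \<Longrightarrow> cheb_psi m \<le> cheb_psi n"
  unfolding cheb_psi_def by (intro sum_mono2) (auto intro: mangoldt_nonneg)

lemma cheb_psi_double_le: "cheb_psi (2*n) - cheb_psi n \<le> 2 * real n * ln 2"
proof -
  define w where "w d = real (2*n div d) - 2 * real (n div d)" for d
  have w_nonneg: "w d \<ge> 0" for d
  proof (cases "d = 0")
    case False
    then have "2 * (n div d) \<le> 2*n div d"
      using div_times_less_eq_dividend[of n d] by (subst less_eq_div_iff_mult_less_eq) auto
    then show ?thesis unfolding w_def by linarith
  qed (simp add: w_def)
  have w_top: "w d = 1" if "d \<in> {n<..2*n}" for d
    using that unfolding w_def by (auto intro: div_nat_eqI)
  have "{1..2*n} = {1..n} \<union> {n<..2*n}" by auto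
  then have "cheb_psi (2*n) = cheb_psi n + (\<Sum>d\<in>{n<..2*n}. mangoldt d)"
    unfolding cheb_psi_def by (subst sum.union_disjoint[symmetric]) auto
  then have "cheb_psi (2*n) - cheb_psi n = (\<Sum>d\<in>{n<..2*n}. mangoldt d * w d)"
    by (simp add: w_top)
  also have "\<dots> \<le> (\<Sum>d=1..2*n. mangoldt d * w d)"
    by (intro sum_mono2) (auto intro!: mult_nonneg_nonneg mangoldt_nonneg w_nonneg)
  also have "\<dots> = ln (fact (2*n)) - 2 * ln (fact n)"
  proof -
    have "(\<Sum>d=1..2*n. mangoldt d * real (n div d)) = (\<Sum>d=1..n. mangoldt d * real (n div d))"
      by (rule sum.mono_neutral_right) auto
    moreover have "(\<Sum>d=1..2*n. mangoldt d * w d) = (\<Sum>d=1..2*n. mangoldt d * real (2*n div d))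
        - 2 * (\<Sum>d=1..2*n. mangoldt d * real (n div d))"
      unfolding w_def by (simp add: sum_subtractf right_diff_distrib sum_distrib_left algebra_simps)
    ultimately show ?thesis by (simp only: ln_fact_eq_sum_mangoldt)
  qed
  also have "\<dots> \<le> 2 * real n * ln 2" by (rule ln_fact_double_le)
  finally show ?thesis .
qed

lemma cheb_psi_le: "cheb_psi n \<le> 4 * real n"
proof (induction n rule: less_induct)
  case (less n)
  have l2: "ln (2::real) \<le> 1" using ln_2_less_1 by simp
  consider "n \<le> 1" | m where "n = 2*m" "m < n" | m where "n = 2*m + 1" "m \<ge> 1"
    by (cases "n \<le> 1"; cases "even n") (auto elim!: evenE oddE)
  then show ?case
  proof cases
    case 1
    then have "n = 0 \<or> n = 1" by auto
    then show ?thesis by (auto simp: cheb_psi_def)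
  next
    case (2 m)
    have "2 * real m * ln 2 \<le> 2 * real m" using mult_left_le[OF l2, of "2 * real m"] by simp
    moreover from 2 have "cheb_psi n = cheb_psi (2*m)" "real n = 2 * real m" by simp_all
    ultimately show ?thesis using less[OF 2(2)] cheb_psi_double_le[of m] by linarith
  next
    case (3 m)
    then have "cheb_psi n \<le> cheb_psi (2*(m+1))" by (intro cheb_psi_mono) auto
    moreover have "(2 + 2 * real m) * ln 2 \<le> 2 + 2 * real m"
      using mult_left_le[OF l2, of "2 + 2 * real m"] by simp
    ultimately show ?thesis
      using 3 less[of "m+1"] cheb_psi_double_le[of "m+1"] by (simp add: algebra_simps)
  qed
qed

definition mertens_R :: "nat \<Rightarrow> real" where
  "mertens_R n = (\<Sum>d=1..n. mangoldt d / real d)"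

lemma mertens_R_bounds:
  assumes "n \<ge> 1"
  shows "ln (real n) - 1 \<le> mertens_R n" "mertens_R n \<le> ln (real n) + 4"
proof -
  have n: "real n > 0" using assms by simp
  have div_ge: "real n / real d - 1 \<le> real (n div d)" for d
    using floor_correct[of "real n / real d"] by (simp add: floor_divide_of_nat_eq)
  have "ln (fact n :: real) \<le> (\<Sum>d=1..n. mangoldt d * (real n / real d))"
    unfolding ln_fact_eq_sum_mangoldt
    by (intro sum_mono mult_left_mono of_nat_div_le_of_nat mangoldt_nonneg)
  also have "\<dots> = real n * mertens_R n"
    unfolding mertens_R_def by (simp add: sum_distrib_left algebra_simps)
  finally have "real n * (ln (real n) - 1) \<le> real n * mertens_R n"
    using ln_fact_ge[OF assms] by (simp add: algebra_simps)
  then show "ln (real n) - 1 \<le> mertens_R n" using n by (simp only: mult_le_cancel_left_pos)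
  have "real n * mertens_R n - cheb_psi n = (\<Sum>d=1..n. mangoldt d * (real n / real d - 1))"
    unfolding mertens_R_def cheb_psi_def by (simp add: sum_distrib_left algebra_simps sum_subtractf)
  also have "\<dots> \<le> ln (fact n :: real)"
    unfolding ln_fact_eq_sum_mangoldt by (intro sum_mono mult_left_mono div_ge mangoldt_nonneg)
  finally have "real n * mertens_R n \<le> real n * (ln (real n) + 4)"
    using ln_fact_le[of n] cheb_psi_le[of n] by (simp add: algebra_simps)
  then show "mertens_R n \<le> ln (real n) + 4" using n by (simp only: mult_le_cancel_left_pos)
qed

definition mertens_S :: "nat \<Rightarrow> real" where
  "mertens_S n = (\<Sum>d=2..n. mangoldt d / (real d * ln (real d)))"

text \<open>Abel summation: the increments of \<open>mertens_G\<close> are \<open>mertens_R n * (1 / ln n - 1 / ln (n + 1))\<close>,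
  which by Mertens' first estimate are close to the increments of \<open>ln (ln n)\<close>.\<close>
definition mertens_G :: "nat \<Rightarrow> real" where
  "mertens_G n = mertens_S n - mertens_R n / ln (real n)"

lemma mertens_G_Suc:
  assumes "n \<ge> 2"
  shows "mertens_G (Suc n) = mertens_G n + mertens_R n * (1 / ln (real n) - 1 / ln (real (Suc n)))"
proof -
  define m where "m = mangoldt (Suc n) / real (Suc n)"
  define b where "b = ln (real (Suc n))"
  have "mertens_S (Suc n) = mertens_S n + m / b" "mertens_R (Suc n) = mertens_R n + m"
    using assms unfolding mertens_S_def mertens_R_def m_def b_def
    by (simp_all add: sum.atLeast_Suc_atMost_Suc_shift del: of_nat_Suc)
  then have "mertens_G (Suc n) = mertens_S n - mertens_R n / b"
    unfolding mertens_G_def b_def by (simp add: add_divide_distrib)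
  then show ?thesis unfolding mertens_G_def b_def by (simp add: right_diff_distrib)
qed

lemma mertens_G_2: "mertens_G 2 = 0"
proof -
  have "mangoldt 2 = (ln 2 :: real)" by simp
  moreover have "mertens_S 2 = mangoldt 2 / (2 * ln 2)" unfolding mertens_S_def by simp
  moreover have "mertens_R 2 = mangoldt 2 / 2" unfolding mertens_R_def by (simp add: numeral_2_eq_2)
  ultimately have S2: "mertens_S 2 = 1/2" and R2: "mertens_R 2 = ln 2 / 2" by simp_all
  show ?thesis unfolding mertens_G_def by (simp only: S2 R2) simp
qed

lemma ln_ln_Suc_bounds:
  assumes "n \<ge> (2::nat)"
  defines "a \<equiv> ln (real n)" and "b \<equiv> ln (real n + 1)"
  shows "(b - a) / b \<le> ln b - ln a" "ln b - ln a \<le> (b - a) / b + (1/a - 1/b)"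
    "0 \<le> 1/a - 1/b" "a > 0" "b > a"
proof -
  show a: "a > 0" unfolding a_def using assms by simp
  show ba: "b > a" unfolding a_def b_def using assms by simp
  have b: "b > 0" using a ba by simp
  have "ln (a / b) \<le> a / b - 1" by (rule ln_le_minus_one) (use a b in simp)
  then show "(b - a) / b \<le> ln b - ln a" using a b by (simp add: ln_div field_simps)
  have upper: "ln b - ln a \<le> b / a - 1"
    using ln_le_minus_one[of "b / a"] a b by (simp add: ln_div)
  show ab: "0 \<le> 1/a - 1/b" using a ba by (simp add: frac_le)
  have "real n * (b - a) \<le> 1"
    using ln_Suc_diff_le[of n] assms unfolding a_def b_def by simp
  moreover have "b - a \<le> real n * (b - a)"
    using ba assms by (intro mult_le_cancel_right1[THEN iffD2]) auto
  ultimately have "b - a \<le> 1" by linarith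
  then have "(b - a) * (1/a - 1/b) \<le> 1/a - 1/b"
    using ab ba by (simp add: mult_left_le_one_le)
  moreover have "b / a - 1 = (b - a) / b + (b - a) * (1/a - 1/b)"
    using a b by (simp add: field_simps)
  ultimately show "ln b - ln a \<le> (b - a) / b + (1/a - 1/b)" using upper by simp
qed

lemma mertens_G_upper:
  assumes "n \<ge> 2"
  shows "mertens_G n \<le> ln (ln (real n)) - ln (ln 2) + 4 / ln 2 - 4 / ln (real n)"
  using assms
proof (induction n rule: dec_induct)
  case (step n)
  define a where "a = ln (real n)"
  define b where "b = ln (real n + 1)"
  note L = ln_ln_Suc_bounds[OF step(1), folded a_def b_def]
  have "mertens_G (Suc n) = mertens_G n + mertens_R n * (1/a - 1/b)"
    using mertens_G_Suc[OF step(1)] unfolding a_def b_def by (simp add: add.commute)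
  also have "\<dots> \<le> mertens_G n + (a + 4) * (1/a - 1/b)"
    using mertens_R_bounds(2)[of n] step(1) L(3) unfolding a_def by (simp add: mult_right_mono)
  also have "(a + 4) * (1/a - 1/b) = (b - a) / b + 4 * (1/a - 1/b)"
    using L(4,5) by (simp add: field_simps)
  finally show ?case using step(3) L(1) unfolding a_def b_def by (simp add: add.commute)
qed (simp add: mertens_G_2)

lemma mertens_G_lower:
  assumes "n \<ge> 2"
  shows "ln (ln (real n)) - ln (ln 2) - 2 / ln 2 + 2 / ln (real n) \<le> mertens_G n"
  using assms
proof (induction n rule: dec_induct)
  case (step n)
  define a where "a = ln (real n)"
  define b where "b = ln (real n + 1)"
  note L = ln_ln_Suc_bounds[OF step(1), folded a_def b_def]
  have "mertens_G (Suc n) = mertens_G n + mertens_R n * (1/a - 1/b)"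
    using mertens_G_Suc[OF step(1)] unfolding a_def b_def by (simp add: add.commute)
  moreover have "(a - 1) * (1/a - 1/b) \<le> mertens_R n * (1/a - 1/b)"
    using mertens_R_bounds(1)[of n] step(1) L(3) unfolding a_def by (simp add: mult_right_mono)
  moreover have "(a - 1) * (1/a - 1/b) = (b - a) / b - (1/a - 1/b)"
    using L(4,5) by (simp add: field_simps)
  ultimately show ?case using step(3) L(2) unfolding a_def b_def by (simp add: add.commute)
qed (simp add: mertens_G_2)

definition mertens_const :: real where
  "mertens_const = 1 - ln (ln 2) + 4 / ln 2"

lemma mertens_const_pos: "mertens_const > 0"
proof -
  have "ln (ln (2::real)) < 0" using ln_2_less_1 by simp
  moreover have "4 / ln (2::real) > 0" by simp
  ultimately show ?thesis unfolding mertens_const_def by linarith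
qed

lemma mertens_S_bounds:
  assumes "n \<ge> 2"
  shows "\<bar>mertens_S n - ln (ln (real n))\<bar> \<le> mertens_const"
proof -
  have l: "ln (real n) > 0" and lnl: "ln (real n) \<ge> ln 2" using assms by simp_all
  have "mertens_S n = mertens_G n + mertens_R n / ln (real n)" unfolding mertens_G_def by simp
  moreover have "mertens_R n / ln (real n) \<le> 1 + 4 / ln (real n)"
    using mertens_R_bounds(2)[of n] assms l by (simp add: field_simps)
  moreover have "(ln (real n) - 1) / ln (real n) \<le> mertens_R n / ln (real n)"
    using mertens_R_bounds(1)[of n] assms l by (intro divide_right_mono) auto
  then have "1 - 1 / ln (real n) \<le> mertens_R n / ln (real n)"
    using l by (simp add: diff_divide_distrib)
  moreover note mertens_G_upper[OF assms] mertens_G_lower[OF assms]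
  moreover have "1 / ln (real n) \<le> 1 / ln 2" using lnl by (simp add: frac_le)
  moreover have "0 \<le> 1 / ln (real n)" using l by simp
  moreover have "ln (ln (2::real)) \<le> 0" using ln_2_less_1 by simp
  moreover have "4 / ln (real n) = 4 * (1 / ln (real n))" "2 / ln (real n) = 2 * (1 / ln (real n))"
     "4 / ln (2::real) = 4 * (1 / ln 2)" "2 / ln (2::real) = 2 * (1 / ln 2)" by simp_all
  ultimately show ?thesis unfolding mertens_const_def abs_le_iff by linarith
qed

lemma sum_telescope_inverse:
  assumes "1 \<le> m" "m \<le> n"
  shows "(\<Sum>p\<in>{m<..n}. 1 / (real p * (real p - 1))) = 1 / real m - 1 / real n"
  using assms(2)
proof (induction n rule: dec_induct)
  case (step n)
  have n0: "real n > 0" using assms step(1) by simp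
  have "{m<..Suc n} = insert (Suc n) {m<..n}" using step(1) by auto
  then have "(\<Sum>p\<in>{m<..Suc n}. 1 / (real p * (real p - 1)))
      = 1 / ((real n + 1) * real n) + (1 / real m - 1 / real n)"
    using step(3) by simp
  moreover have "1 / real n - 1 / ((real n + 1) * real n) = 1 / real (Suc n)"
    using n0 by (simp add: divide_simps)
  ultimately show ?case by linarith
qed simp

lemma sum_inverse_powers_le:
  assumes "p \<ge> (2::nat)"
  shows "(\<Sum>k=2..m. (1 / real p) ^ k) \<le> 1 / (real p * (real p - 1))"
proof (cases "m < 2")
  case False
  define x where "x = 1 / real p"
  have x: "0 \<le> x" "x < 1" using assms unfolding x_def by simp_all
  have "(\<Sum>k=2..m. x^k) = (x^2 - x^Suc m) / (1 - x)"
    using x False by (subst sum_gp) auto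
  also have "\<dots> \<le> x^2 / (1 - x)"
    using x by (intro divide_right_mono) auto
  also have "\<dots> = 1 / (real p * (real p - 1))"
    using assms unfolding x_def by (simp add: field_simps power2_eq_square)
  finally show ?thesis unfolding x_def .
qed (use assms in simp)

lemma mertens_S_nonprime_le:
  "(\<Sum>d\<in>{d\<in>{2..n}. \<not> prime d}. mangoldt d / (real d * ln (real d))) \<le> 1"
proof -
  let ?f = "\<lambda>d. mangoldt d / (real d * ln (real d)) :: real"
  define D where "D = {d\<in>{2..n}. primepow d \<and> \<not> prime d}"
  have "(\<Sum>d\<in>{d\<in>{2..n}. \<not> prime d}. ?f d) = (\<Sum>d\<in>D. ?f d)"
    unfolding D_def by (rule sum.mono_neutral_right) (auto simp: mangoldt_def)
  also have "\<dots> \<le> (\<Sum>(p, k)\<in>{2..n} \<times> {2..n}. (1 / real p) ^ k)"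
  proof (rule sum_le_included[where i = "\<lambda>(p, k). p ^ k"])
    show "\<forall>d\<in>D. \<exists>q\<in>{2..n} \<times> {2..n}. (case q of (p, k) \<Rightarrow> p ^ k) = d
        \<and> ?f d \<le> (case q of (p, k) \<Rightarrow> (1 / real p) ^ k)"
    proof
      fix d assume "d \<in> D"
      then have "d \<le> n" "primepow d" "\<not> prime d" unfolding D_def by auto
      then obtain p k where "prime p" "k > 0" "d = p ^ k" unfolding primepow_def by blast
      with \<open>d \<le> n\<close> \<open>\<not> prime d\<close> have d: "d \<le> n" "prime p" "k \<noteq> 1" "k > 0" "d = p ^ k"
        by auto
      have p2: "p \<ge> 2" using d prime_ge_2_nat by auto
      have "k < 2 ^ k" by (rule less_exp)
      also have "\<dots> \<le> p ^ k" using p2 by (simp add: power_mono)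
      finally have "p \<le> p ^ k" "k < p ^ k" using d p2 by (auto simp: self_le_power)
      then have "p \<in> {2..n}" "k \<in> {2..n}" using d p2 by auto
      have "?f d = 1 / (real k * real p ^ k)"
        using d p2 by (simp add: ln_realpow field_simps)
      also have "\<dots> \<le> 1 / real p ^ k" using d p2 by (intro divide_left_mono) auto
      also have "\<dots> = (1 / real p) ^ k" by (simp add: power_divide)
      finally show "\<exists>q\<in>{2..n} \<times> {2..n}. (case q of (p, k) \<Rightarrow> p ^ k) = d
          \<and> ?f d \<le> (case q of (p, k) \<Rightarrow> (1 / real p) ^ k)"
        using \<open>p \<in> {2..n}\<close> \<open>k \<in> {2..n}\<close> d by (intro bexI[of _ "(p, k)"]) auto
    qed
  qed (auto simp: D_def)
  also have "\<dots> = (\<Sum>p\<in>{1<..n}. \<Sum>k=2..n. (1 / real p) ^ k)"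
    by (simp add: sum.cartesian_product[symmetric] greaterThanAtMost_eq_atLeastAtMost_diff
        atLeastAtMost_iff Suc_1[symmetric] atLeastSucAtMost_greaterThanAtMost)
  also have "\<dots> \<le> (\<Sum>p\<in>{1<..n}. 1 / (real p * (real p - 1)))"
    by (intro sum_mono sum_inverse_powers_le) auto
  also have "\<dots> \<le> 1"
    using sum_telescope_inverse[of 1 n] by (cases "n \<ge> 1") auto
  finally show ?thesis .
qed

definition primes_below :: "real \<Rightarrow> nat set" where
  "primes_below z = {p. prime p \<and> real p < z}"

lemma finite_primes_below [simp]: "finite (primes_below z)"
  unfolding primes_below_def
  by (rule finite_subset[of _ "{..nat \<lceil>z\<rceil>}"]) (auto, linarith)

lemma primes_below_mono: "z \<le> x \<Longrightarrow> primes_below z \<subseteq> primes_below x"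
  unfolding primes_below_def by auto

definition prime_recip_sum :: "real \<Rightarrow> real" where
  "prime_recip_sum z = (\<Sum>p\<in>primes_below z. 1 / real p)"

lemma prime_recip_sum_nonneg: "prime_recip_sum z \<ge> 0"
  unfolding prime_recip_sum_def by (intro sum_nonneg) auto

lemma prime_recip_sum_mertens_S:
  "prime_recip_sum (real n + 1) \<le> mertens_S n" "mertens_S n \<le> prime_recip_sum (real n + 1) + 1"
proof -
  let ?f = "\<lambda>d. mangoldt d / (real d * ln (real d)) :: real"
  have "prime_recip_sum (real n + 1) = (\<Sum>d\<in>{d\<in>{2..n}. prime d}. ?f d)"
    unfolding prime_recip_sum_def primes_below_def
  proof (intro sum.cong)
    show "{p. prime p \<and> real p < real n + 1} = {d\<in>{2..n}. prime d}"
      by (auto dest: prime_ge_2_nat)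
  qed (auto dest: prime_ge_2_nat)
  moreover have "mertens_S n = (\<Sum>d\<in>{d\<in>{2..n}. prime d}. ?f d) + (\<Sum>d\<in>{d\<in>{2..n}. \<not> prime d}. ?f d)"
    unfolding mertens_S_def by (subst sum.union_disjoint[symmetric]) (auto intro!: sum.cong)
  moreover have "0 \<le> (\<Sum>d\<in>{d\<in>{2..n}. \<not> prime d}. ?f d)"
    by (intro sum_nonneg divide_nonneg_nonneg mangoldt_nonneg) auto
  ultimately show "prime_recip_sum (real n + 1) \<le> mertens_S n"
    "mertens_S n \<le> prime_recip_sum (real n + 1) + 1"
    using mertens_S_nonprime_le[of n] by linarith+
qed

lemma mertens_second:
  assumes "z \<ge> 3"
  shows "\<bar>prime_recip_sum z - ln (ln z)\<bar> \<le> mertens_const + 2"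
proof -
  define N where "N = nat (\<lceil>z\<rceil> - 1)"
  have c3: "\<lceil>z\<rceil> \<ge> 3" using assms by (metis ceiling_mono ceiling_numeral)
  have N: "real N = real_of_int \<lceil>z\<rceil> - 1" unfolding N_def using c3 by simp
  have N2: "N \<ge> 2" unfolding N_def using c3 by arith
  have zN: "real N < z" "z \<le> real N + 1" using N by (simp_all add: ceiling_less_cancel le_of_int_ceiling)
  have "real p < z \<longleftrightarrow> real p < real N + 1" for p :: nat
  proof -
    have "real p < z \<longleftrightarrow> p \<le> N"
    proof
      assume "real p < z"
      then have "int p < \<lceil>z\<rceil>" by (simp add: less_ceiling_iff)
      then show "p \<le> N" unfolding N_def by simp
    qed (use zN in simp)
    then show ?thesis by (simp add: nat_le_real_less)
  qed
  then have sum_eq: "prime_recip_sum z = prime_recip_sum (real N + 1)"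
    unfolding prime_recip_sum_def primes_below_def by simp
  have lN: "ln (real N) > 0" using N2 by simp
  have "ln (ln (real N)) \<le> ln (ln z)"
    using zN N2 lN by (subst ln_le_cancel_iff) auto
  moreover have "ln (ln z) \<le> ln (ln (real N)) + 1"
  proof -
    have "N + 1 \<le> N * N" using mult_le_mono1[OF N2, of N] N2 by linarith
    then have "real N + 1 \<le> real N * real N" by (metis of_nat_1 of_nat_add of_nat_le_iff of_nat_mult)
    then have "ln z \<le> ln (real N * real N)" using assms zN by (subst ln_le_cancel_iff) auto
    also have "\<dots> = 2 * ln (real N)" using N2 by (simp add: ln_mult)
    finally have "ln (ln z) \<le> ln (2 * ln (real N))" using assms lN by (subst ln_le_cancel_iff) auto
    also have "\<dots> = ln 2 + ln (ln (real N))" using lN by (simp add: ln_mult)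
    finally show ?thesis using ln_2_less_1 by simp
  qed
  ultimately show ?thesis
    using mertens_S_bounds[OF N2] prime_recip_sum_mertens_S[of N] sum_eq by (simp add: abs_le_iff)
qed

section \<open>The random model\<close>

lemma tau_mult_prime:
  assumes a: "prime a" and "\<not> a dvd n" "n > 0"
  shows "tau (a * n) = 2 * tau n"
proof -
  have divisors: "{d. d dvd a * n} = {d. d dvd n} \<union> (\<lambda>d. a * d) ` {d. d dvd n}"
  proof (intro equalityI subsetI)
    fix d assume "d \<in> {d. d dvd a * n}"
    then have d: "d dvd a * n" by simp
    show "d \<in> {d. d dvd n} \<union> (\<lambda>d. a * d) ` {d. d dvd n}"
    proof (cases "a dvd d")
      case True
      then obtain e where e: "d = a * e" by auto
      then have "e dvd n" using d a by (simp add: prime_gt_0_nat)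
      then show ?thesis using e by auto
    next
      case False
      then have "coprime d a" using a by (simp add: prime_imp_coprime coprime_commute)
      then show ?thesis using d coprime_dvd_mult_right_iff[of d a n] by simp
    qed
  qed auto
  have "{d. d dvd n} \<inter> (\<lambda>d. a * d) ` {d. d dvd n} = {}"
    using assms(2) by (auto dest: dvd_mult_left)
  moreover have "inj_on (\<lambda>d. a * d) {d. d dvd n}" using a by (auto simp: inj_on_def prime_gt_0_nat)
  moreover have "finite {d. d dvd n}" using assms(3) by simp
  ultimately show ?thesis
    unfolding tau_def divisors by (simp add: card_Un_disjoint card_image)
qed

lemma tau_prod_distinct_primes:
  assumes "finite B" "\<And>p. p \<in> B \<Longrightarrow> prime p"
  shows "tau (\<Prod>p\<in>B. p) = 2 ^ card B"
  using assms
proof (induction B rule: finite_induct)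
  case empty
  have "{d. d dvd (1::nat)} = {1}" by auto
  then show ?case unfolding tau_def by simp
next
  case (insert a B)
  have "\<not> a dvd (\<Prod>p\<in>B. p)"
  proof
    assume "a dvd (\<Prod>p\<in>B. p)"
    then obtain q where "q \<in> B" "a dvd q"
      using prime_dvd_prod_iff[OF insert(1), of a "\<lambda>p. p"] insert.prems by auto
    then show False using insert primes_dvd_imp_eq by (metis insertCI)
  qed
  moreover have "(\<Prod>p\<in>B. p) > 0" using insert by (auto intro!: prod_pos prime_gt_0_nat)
  ultimately show ?case using insert tau_mult_prime by simp
qed

lemma omega_prod_distinct_primes:
  assumes "finite B" "\<And>p. p \<in> B \<Longrightarrow> prime p"
  shows "omega (\<Prod>p\<in>B. p) = card B"
proof -
  have "prime_factors (\<Prod>p\<in>B. p) = \<Union>((prime_factors \<circ> (\<lambda>p. p)) ` B)"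
    using assms by (intro prime_factors_prod) (auto dest: prime_gt_0_nat)
  also have "\<dots> = B" using assms by (auto simp: prime_prime_factors)
  finally show ?thesis unfolding omega_def by simp
qed

lemma n_lt_eq: "n_lt w z = (\<Prod>p\<in>primes_below z. w p)"
  unfolding n_lt_def primes_below_def ..

lemma measurable_model_prod:
  assumes "finite S" "S \<subseteq> {p. prime p}"
  shows "(\<lambda>w. \<Prod>p\<in>S. w p) \<in> measurable model (count_space UNIV)"
  using assms
proof (induction S rule: finite_induct)
  case (insert a S)
  have "(\<lambda>w. w a) \<in> measurable model (measure_pmf (np_pmf a))"
    unfolding model_def using insert by (intro measurable_component_singleton) auto
  then have component: "(\<lambda>w. w a) \<in> measurable model (count_space UNIV)"
    by (simp add: measurable_cong_sets[OF refl sets_measure_pmf_count_space])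
  have "(\<lambda>w. (\<lambda>i w. w a * i) (\<Prod>p\<in>S. w p) w) \<in> measurable model (count_space UNIV)"
  proof (rule measurable_compose_countable[where g="\<lambda>w. \<Prod>p\<in>S. w p"])
    show "(\<lambda>w. w a * i) \<in> measurable model (count_space UNIV)" for i :: nat
      using measurable_compose[OF component, of "\<lambda>v. v * i"] by simp
  qed (use insert in auto)
  then show ?case using insert by simp
qed simp

lemma measurable_n_lt: "(\<lambda>w. n_lt w z) \<in> measurable model (count_space UNIV)"
  unfolding n_lt_eq by (rule measurable_model_prod[OF finite_primes_below]) (auto simp: primes_below_def)

lemma pmf_np_pmf:
  assumes "prime p"
  shows "pmf (np_pmf p) p = 1 / (real p + 1)" "pmf (np_pmf p) 1 = 1 - 1 / (real p + 1)"
    "set_pmf (np_pmf p) \<subseteq> {1, p}"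
proof -
  have p1: "p \<noteq> 1" using assms by auto
  have q: "0 \<le> 1 / (real p + 1)" "1 / (real p + 1) \<le> 1" by (auto simp: field_simps)
  have "(\<lambda>b. if b then p else 1) -` {p} = {True}" using p1 by (auto split: if_splits)
  then show "pmf (np_pmf p) p = 1 / (real p + 1)"
    unfolding np_pmf_def pmf_map using q by (simp add: measure_pmf_single)
  have "(\<lambda>b. if b then p else 1) -` {1} = {False}" using p1 by auto
  then show "pmf (np_pmf p) 1 = 1 - 1 / (real p + 1)"
    unfolding np_pmf_def pmf_map using q by (simp add: measure_pmf_single)
  show "set_pmf (np_pmf p) \<subseteq> {1, p}" unfolding np_pmf_def by auto
qed

text \<open>\<open>pattern_prob P A\<close> is the probability that, among the primes of \<open>P\<close>, exactly those of \<open>A\<close>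
  have \<open>n\<^sub>p = p\<close>; \<open>pattern_expect P r \<phi>\<close> is the expectation of \<open>1{\<omega> = r} \<phi>(A)\<close> for this random set.\<close>
definition pattern_prob :: "nat set \<Rightarrow> nat set \<Rightarrow> real" where
  "pattern_prob P A = (\<Prod>p\<in>P. if p \<in> A then 1 / (real p + 1) else 1 - 1 / (real p + 1))"

lemma pattern_prob_nonneg: "pattern_prob P A \<ge> 0"
  unfolding pattern_prob_def by (intro prod_nonneg) (auto simp: field_simps)

definition pattern_expect :: "nat set \<Rightarrow> nat \<Rightarrow> (nat set \<Rightarrow> real) \<Rightarrow> real" where
  "pattern_expect P r \<phi> = (\<Sum>A\<in>Pow P. pattern_prob P A * ((if card A = r then 1 else 0) * \<phi> A))"

lemma AE_model_values:
  assumes "finite P" "P \<subseteq> {p. prime p}"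
  shows "AE w in model. \<forall>p\<in>P. w p \<in> {1, p}"
proof (rule AE_finite_allI[OF assms(1)])
  interpret product_prob_space "\<lambda>p. measure_pmf (np_pmf p)" "{p. prime p}"
    by (rule product_prob_spaceI) (simp add: prob_space_measure_pmf)
  fix p assume "p \<in> P"
  then have p: "prime p" using assms(2) by auto
  have "AE u in measure_pmf (np_pmf p). u \<in> {1, p}"
    using pmf_np_pmf(3)[OF p] by (auto simp: AE_measure_pmf_iff)
  then show "AE w in model. w p \<in> {1, p}"
    unfolding model_def using p by (intro AE_component) auto
qed

definition pattern_event :: "nat set \<Rightarrow> nat set \<Rightarrow> (nat \<Rightarrow> nat) set" where
  "pattern_event P A = {w \<in> space model. \<forall>p\<in>P. w p \<in> {if p \<in> A then p else 1}}"

lemma sets_pattern_event: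
  assumes "finite P" "P \<subseteq> {p. prime p}"
  shows "pattern_event P A \<in> sets model"
  unfolding pattern_event_def model_def
  by (intro sets.sets_Collect_finite_All) (use assms in \<open>auto intro!: sets_Collect_single'\<close>)

lemma measure_pattern_event:
  assumes "finite P" "P \<subseteq> {p. prime p}"
  shows "measure model (pattern_event P A) = pattern_prob P A"
proof -
  interpret product_prob_space "\<lambda>p. measure_pmf (np_pmf p)" "{p. prime p}"
    by (rule product_prob_spaceI) (simp add: prob_space_measure_pmf)
  have "emeasure model (pattern_event P A)
      = (\<Prod>p\<in>P. emeasure (measure_pmf (np_pmf p)) {if p \<in> A then p else 1})"
    unfolding model_def pattern_event_def by (intro emeasure_PiM_Collect) (use assms in auto)
  also have "\<dots> = (\<Prod>p\<in>P. ennreal (if p \<in> A then 1 / (real p + 1) else 1 - 1 / (real p + 1)))"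
    using assms pmf_np_pmf by (intro prod.cong refl) (auto simp: emeasure_pmf_single)
  also have "\<dots> = ennreal (pattern_prob P A)"
    unfolding pattern_prob_def by (subst prod_ennreal) (auto simp: field_simps)
  finally show ?thesis using pattern_prob_nonneg by (simp add: measure_def)
qed

lemma mem_pattern_event_iff:
  assumes "P \<subseteq> {p. prime p}" "A \<subseteq> P" "w \<in> space model" "\<forall>p\<in>P. w p \<in> {1, p}"
  shows "w \<in> pattern_event P A \<longleftrightarrow> A = {p\<in>P. w p = p}"
proof -
  have p1: "p \<noteq> 1" if "p \<in> P" for p using assms(1) that by auto
  have "w \<in> pattern_event P A \<longleftrightarrow> (\<forall>p\<in>P. w p = (if p \<in> A then p else 1))"
    using assms(3) unfolding pattern_event_def by simp
  also have "\<dots> \<longleftrightarrow> A = {p\<in>P. w p = p}"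
  proof
    assume h: "\<forall>p\<in>P. w p = (if p \<in> A then p else 1)"
    show "A = {p\<in>P. w p = p}"
    proof (intro equalityI subsetI)
      fix p assume "p \<in> A"
      then show "p \<in> {p\<in>P. w p = p}" using h assms(2) by auto
    next
      fix p assume "p \<in> {p\<in>P. w p = p}"
      then show "p \<in> A" using h p1 by (metis (mono_tags, lifting) mem_Collect_eq)
    qed
  next
    assume "A = {p\<in>P. w p = p}"
    then show "\<forall>p\<in>P. w p = (if p \<in> A then p else 1)" using assms(4) by auto
  qed
  finally show ?thesis .
qed

lemma integral_model_pattern:
  assumes P_primes: "finite P" "P \<subseteq> {p. prime p}" and F: "F \<in> borel_measurable model"
    and F_eq: "\<And>w. \<forall>p\<in>P. w p \<in> {1, p} \<Longrightarrow> F w = G {p\<in>P. w p = p}"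
  shows "integral\<^sup>L model F = (\<Sum>A\<in>Pow P. pattern_prob P A * G A)"
proof -
  interpret product_prob_space "\<lambda>p. measure_pmf (np_pmf p)" "{p. prime p}"
    by (rule product_prob_spaceI) (simp add: prob_space_measure_pmf)
  have "AE w in model. F w = (\<Sum>A\<in>Pow P. G A * indicator (pattern_event P A) w)"
    using AE_model_values[OF P_primes]
  proof (rule AE_mp, intro AE_I2 impI)
    fix w assume w: "w \<in> space model" "\<forall>p\<in>P. w p \<in> {1, p}"
    have "(\<Sum>A\<in>Pow P. G A * indicator (pattern_event P A) w)
        = (\<Sum>A\<in>Pow P. if A = {p\<in>P. w p = p} then G A else 0)"
      using mem_pattern_event_iff[OF P_primes(2) _ w] by (intro sum.cong refl) (simp add: indicator_def)
    also have "\<dots> = G {p\<in>P. w p = p}" using P_primes by (simp add: sum.delta')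
    finally show "F w = (\<Sum>A\<in>Pow P. G A * indicator (pattern_event P A) w)" using F_eq[OF w(2)] by simp
  qed
  then have "integral\<^sup>L model F = integral\<^sup>L model (\<lambda>w. \<Sum>A\<in>Pow P. G A * indicator (pattern_event P A) w)"
    using F sets_pattern_event[OF P_primes] by (intro integral_cong_AE) auto
  also have "\<dots> = (\<Sum>A\<in>Pow P. integral\<^sup>L model (\<lambda>w. G A * indicator (pattern_event P A) w))"
    using sets_pattern_event[OF P_primes]
    by (intro integral_sum' integrable_mult_right integrable_real_indicator) (auto simp: model_def emeasure_eq_measure)
  also have "\<dots> = (\<Sum>A\<in>Pow P. pattern_prob P A * G A)"
    using sets_pattern_event[OF P_primes] measure_pattern_event[OF P_primes] by (simp add: sets.Int_space_eq2 mult.commute)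
  finally show ?thesis .
qed

lemma n_lt_pattern:
  assumes "\<forall>p\<in>primes_below x. w p \<in> {1, p}" "z \<le> x"
  shows "n_lt w z = (\<Prod>p\<in>{p\<in>primes_below x. w p = p \<and> real p < z}. p)"
proof -
  have sub: "primes_below z \<subseteq> primes_below x" using assms(2) by (rule primes_below_mono)
  have "n_lt w z = (\<Prod>p\<in>primes_below z. if w p = p then p else 1)"
    unfolding n_lt_eq using assms(1) sub by (intro prod.cong) auto
  also have "\<dots> = (\<Prod>p\<in>{p\<in>primes_below z. w p = p}. p)"
    by (simp add: prod.inter_filter)
  also have "{p\<in>primes_below z. w p = p} = {p\<in>primes_below x. w p = p \<and> real p < z}"
    using sub by (auto simp: primes_below_def)
  finally show ?thesis .
qed

lemma expectation_eq_sum_patterns: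
  fixes x :: real and Y :: "real set"
  assumes Y: "finite Y" "\<And>y. y \<in> Y \<Longrightarrow> y \<le> x"
  shows "(\<integral>w. (if omega (n_lt w x) = r then 1 else 0) *
            Max ((\<lambda>y. real (tau (n_lt w y)) / Log y) ` Y) \<partial>model)
       = pattern_expect (primes_below x) r (\<lambda>A. Max ((\<lambda>y. 2 ^ card {p\<in>A. real p < y} / Log y) ` Y))"
  unfolding pattern_expect_def
proof (rule integral_model_pattern)
  show "primes_below x \<subseteq> {p. prime p}" by (auto simp: primes_below_def)
  have "(\<lambda>w. real (tau (n_lt w y)) / Log y) \<in> borel_measurable model" for y
    using measurable_compose[OF measurable_n_lt, of "\<lambda>n. real (tau n) / Log y"] by simp
  then show "(\<lambda>w. (if omega (n_lt w x) = r then 1 else 0) *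
      Max ((\<lambda>y. real (tau (n_lt w y)) / Log y) ` Y)) \<in> borel_measurable model"
    using measurable_compose[OF measurable_n_lt, of "\<lambda>n. if omega n = r then 1 else (0::real)"] Y(1)
    by (intro borel_measurable_times borel_measurable_Max) auto
next
  fix w assume w: "\<forall>p\<in>primes_below x. w p \<in> {1, p}"
  define A where "A = {p\<in>primes_below x. w p = p}"
  have "finite A" unfolding A_def by simp
  moreover have "\<And>p. p \<in> A \<Longrightarrow> prime p" by (auto simp: A_def primes_below_def)
  ultimately have A: "finite A" "\<And>p. p \<in> A \<Longrightarrow> prime p" .
  have "{p\<in>primes_below x. w p = p \<and> real p < x} = A" unfolding A_def by (auto simp: primes_below_def)
  then have "omega (n_lt w x) = card A"
    using n_lt_pattern[OF w order_refl] omega_prod_distinct_primes[OF A] by simp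
  moreover have "tau (n_lt w y) = 2 ^ card {p\<in>A. real p < y}" if "y \<in> Y" for y
  proof -
    have "{p\<in>primes_below x. w p = p \<and> real p < y} = {p\<in>A. real p < y}" unfolding A_def by auto
    then show ?thesis
      using n_lt_pattern[OF w Y(2)[OF that]] tau_prod_distinct_primes[of "{p\<in>A. real p < y}"] A by simp
  qed
  ultimately show "(if omega (n_lt w x) = r then 1 else 0) * Max ((\<lambda>y. real (tau (n_lt w y)) / Log y) ` Y)
      = (if card A = r then 1 else 0) * Max ((\<lambda>y. 2 ^ card {p\<in>A. real p < y} / Log y) ` Y)"
    by (simp cong: image_cong)
qed simp

section \<open>Elementary symmetric functions\<close>

definition esym :: "nat \<Rightarrow> ('a \<Rightarrow> real) \<Rightarrow> 'a set \<Rightarrow> real" where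
  "esym r c S = (\<Sum>B\<in>{B. B \<subseteq> S \<and> card B = r}. \<Prod>p\<in>B. c p)"

lemma esym_empty: "esym r c {} = (if r = 0 then 1 else 0)"
proof -
  have empty: "{B. B \<subseteq> {} \<and> card B = r} = (if r = 0 then {{}} else {})" by auto
  show ?thesis unfolding esym_def empty by simp
qed

lemma esym_0: "finite S \<Longrightarrow> esym 0 c S = 1"
proof -
  assume "finite S"
  then have "{B. B \<subseteq> S \<and> card B = 0} = {{}}" by (auto dest: finite_subset)
  then show ?thesis unfolding esym_def by simp
qed

lemma esym_insert:
  assumes "finite S" "a \<notin> S"
  shows "esym (Suc r) c (insert a S) = esym (Suc r) c S + c a * esym r c S"
proof -
  let ?A = "{B. B \<subseteq> S \<and> card B = Suc r}"
  let ?B = "{B. B \<subseteq> S \<and> card B = r}"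
  have eq: "{B. B \<subseteq> insert a S \<and> card B = Suc r} = ?A \<union> insert a ` ?B"
  proof (intro equalityI subsetI)
    fix B assume B: "B \<in> {B. B \<subseteq> insert a S \<and> card B = Suc r}"
    show "B \<in> ?A \<union> insert a ` ?B"
    proof (cases "a \<in> B")
      case True
      have "finite B" using B assms by (auto intro: finite_subset)
      then have "card (B - {a}) = r" "B - {a} \<subseteq> S" "B = insert a (B - {a})"
        using B True by auto
      then show ?thesis by blast
    qed (use B in auto)
  next
    fix B assume "B \<in> ?A \<union> insert a ` ?B"
    then consider "B \<in> ?A" | C where "C \<subseteq> S" "card C = r" "B = insert a C" by auto
    then show "B \<in> {B. B \<subseteq> insert a S \<and> card B = Suc r}"
    proof cases
      case (2 C)
      then have "finite C" "a \<notin> C" using assms by (auto intro: finite_subset)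
      then show ?thesis using 2 by auto
    qed auto
  qed
  have disj: "?A \<inter> insert a ` ?B = {}" using assms by auto
  have inj: "inj_on (insert a) ?B"
    unfolding inj_on_def using assms by (metis (mono_tags, lifting) insert_ident mem_Collect_eq subset_iff)
  have "esym (Suc r) c (insert a S) = (\<Sum>B\<in>?A. \<Prod>p\<in>B. c p) + (\<Sum>B\<in>insert a ` ?B. \<Prod>p\<in>B. c p)"
    unfolding esym_def eq using assms disj by (intro sum.union_disjoint) auto
  also have "(\<Sum>B\<in>insert a ` ?B. \<Prod>p\<in>B. c p) = (\<Sum>C\<in>?B. \<Prod>p\<in>insert a C. c p)"
    using sum.reindex[OF inj] by (simp add: o_def)
  also have "\<dots> = (\<Sum>C\<in>?B. c a * (\<Prod>p\<in>C. c p))"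
  proof (rule sum.cong[OF refl])
    fix C assume "C \<in> ?B"
    then have "finite C" "a \<notin> C" using assms by (auto intro: finite_subset)
    then show "(\<Prod>p\<in>insert a C. c p) = c a * (\<Prod>p\<in>C. c p)" by simp
  qed
  finally show ?thesis unfolding esym_def by (simp add: sum_distrib_left)
qed

lemma esym_mono_set:
  assumes "finite S" "S' \<subseteq> S" "\<And>p. p \<in> S \<Longrightarrow> c p \<ge> 0"
  shows "esym r c S' \<le> esym r c S"
  unfolding esym_def using assms by (intro sum_mono2) (auto intro!: prod_nonneg)

lemma power_add_ge_linear:
  fixes s c :: real
  assumes "s \<ge> 0" "c \<ge> 0"
  shows "s^n + real n * c * s^(n - 1) \<le> (s + c)^n"
proof (induction n)
  case (Suc n)
  show ?case
  proof (cases n)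
    case (Suc m)
    have "s^Suc n + real (Suc n) * c * s^n = s * (s^n + real n * c * s^(n-1)) + c * s^n"
      using Suc by (simp add: algebra_simps)
    also have "\<dots> \<le> s * (s+c)^n + c * (s+c)^n"
      using Suc.IH assms by (intro add_mono mult_left_mono power_mono) auto
    also have "\<dots> = (s+c)^Suc n" by (simp add: algebra_simps)
    finally show ?thesis by simp
  qed simp
qed simp

lemma power_add_le_quadratic:
  fixes s c :: real
  assumes "s \<ge> 0" "c \<ge> 0"
  shows "(s+c)^(n+2) \<le> s^(n+2) + real (n+2) * c * s^(n+1) + (real (n+2) * real (n+1) / 2) * c^2 * (s+c)^n"
proof (induction n)
  case 0 then show ?case by (simp add: power2_eq_square algebra_simps)
next
  case (Suc n)
  define X where "X = (s+c)^(n+1)"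
  have "s^(n+1) \<le> X" unfolding X_def using assms by (intro power_mono) auto
  then have "real (n+2) * s^(n+1) \<le> real (n+2) * X" by (intro mult_left_mono) auto
  moreover have "real (n+2) * X + (real (n+2) * real (n+1) / 2) * X = (real (Suc n + 2) * real (Suc n + 1) / 2) * X"
    by (simp add: field_simps)
  ultimately have "real (n+2) * s^(n+1) + (real (n+2) * real (n+1) / 2) * X
      \<le> (real (Suc n + 2) * real (Suc n + 1) / 2) * X"
    by linarith
  then have step: "c^2 * (real (n+2) * s^(n+1) + (real (n+2) * real (n+1) / 2) * X)
      \<le> c^2 * ((real (Suc n + 2) * real (Suc n + 1) / 2) * X)"
    by (rule mult_left_mono) simp
  have "(s+c)^(Suc n + 2) = (s+c) * (s+c)^(n+2)" by (metis add_Suc power_Suc)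
  also have "\<dots> \<le> (s+c) * (s^(n+2) + real (n+2) * c * s^(n+1) + (real (n+2) * real (n+1) / 2) * c^2 * (s+c)^n)"
    using Suc.IH assms by (intro mult_left_mono) auto
  also have "\<dots> = s^(Suc n + 2) + real (Suc n + 2) * c * s^(Suc n + 1)
      + c^2 * (real (n+2) * s^(n+1) + (real (n+2) * real (n+1) / 2) * X)"
    unfolding X_def by (simp add: algebra_simps power2_eq_square)
  also have "\<dots> \<le> s^(Suc n + 2) + real (Suc n + 2) * c * s^(Suc n + 1)
      + c^2 * ((real (Suc n + 2) * real (Suc n + 1) / 2) * X)"
    using step by simp
  finally show ?case unfolding X_def by (simp add: mult_ac)
qed

lemma fact_mult_esym_le:
  assumes "finite S" "\<And>p. p \<in> S \<Longrightarrow> c p \<ge> 0"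
  shows "fact r * esym r c S \<le> (\<Sum>p\<in>S. c p) ^ r"
  using assms
proof (induction S arbitrary: r rule: finite_induct)
  case empty then show ?case by (simp add: esym_empty)
next
  case (insert a S)
  define s where "s = (\<Sum>p\<in>S. c p)"
  have ca: "c a \<ge> 0" and s: "s \<ge> 0" using insert unfolding s_def by (auto intro: sum_nonneg)
  show ?case
  proof (cases r)
    case (Suc m)
    have "fact r * esym r c (insert a S)
        = fact (Suc m) * esym (Suc m) c S + real (Suc m) * c a * (fact m * esym m c S)"
      using Suc insert by (simp add: esym_insert algebra_simps)
    also have "\<dots> \<le> s ^ Suc m + real (Suc m) * c a * s ^ m"
    proof -
      have "fact (Suc m) * esym (Suc m) c S \<le> s ^ Suc m" "fact m * esym m c S \<le> s ^ m"
        using insert unfolding s_def by blast+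
      moreover have "0 \<le> real (Suc m) * c a" using ca by simp
      ultimately show ?thesis by (intro add_mono mult_left_mono)
    qed
    also have "\<dots> \<le> (s + c a) ^ Suc m"
      using power_add_ge_linear[OF s ca, of "Suc m"] by simp
    finally show ?thesis using Suc insert unfolding s_def by (simp add: add.commute)
  qed (use insert in \<open>simp add: esym_0\<close>)
qed

lemma esym_lower_step:
  fixes s t a :: real
  assumes "s \<ge> 0" "t \<ge> 0" "a \<ge> 0"
  shows "(s + a)^(k+2) - (real (k+2) * real (k+1) / 2) * (t + a^2) * (s + a)^k
    \<le> (s^(k+2) - (real (k+2) * real (k+1) / 2) * t * s^k)
      + real (k+2) * a * (s^(k+1) - (real (k+1) * real k / 2) * t * s^(k - 1))"
proof -
  define C2 where "C2 = real (k+2) * real (k+1) / 2"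
  have "C2 * t * (s^k + real k * a * s^(k - 1)) \<le> C2 * t * (s + a)^k"
    unfolding C2_def using power_add_ge_linear[OF assms(1,3)] assms by (intro mult_left_mono) auto
  moreover have "(s + a)^(k+2) \<le> s^(k+2) + real (k+2) * a * s^(k+1) + C2 * a^2 * (s + a)^k"
    unfolding C2_def by (rule power_add_le_quadratic[OF assms(1,3)])
  moreover have "(s^(k+2) - C2 * t * s^k) + real (k+2) * a * (s^(k+1) - (real (k+1) * real k / 2) * t * s^(k - 1))
      = s^(k+2) + real (k+2) * a * s^(k+1) - C2 * t * (s^k + real k * a * s^(k - 1))"
    unfolding C2_def by (simp add: field_simps)
  moreover have "C2 * (t + a^2) * (s + a)^k = C2 * t * (s + a)^k + C2 * a^2 * (s + a)^k"
    by (simp add: algebra_simps)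
  ultimately show ?thesis unfolding C2_def[symmetric] by linarith
qed

lemma fact_mult_esym_ge:
  assumes "finite S" "\<And>p. p \<in> S \<Longrightarrow> c p \<ge> 0"
  shows "(\<Sum>p\<in>S. c p) ^ r - (real r * (real r - 1) / 2) * (\<Sum>p\<in>S. c p ^ 2) * (\<Sum>p\<in>S. c p) ^ (r - 2)
           \<le> fact r * esym r c S"
  using assms
proof (induction S arbitrary: r rule: finite_induct)
  case empty then show ?case by (cases r) (auto simp: esym_empty)
next
  case (insert a S)
  define s where "s = (\<Sum>p\<in>S. c p)"
  define t where "t = (\<Sum>p\<in>S. c p ^ 2)"
  have a: "c a \<ge> 0" and s: "s \<ge> 0" and t: "t \<ge> 0"
    using insert unfolding s_def t_def by (auto intro: sum_nonneg)
  have IH: "s ^ k - (real k * (real k - 1) / 2) * t * s ^ (k - 2) \<le> fact k * esym k c S" for k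
    using insert unfolding s_def t_def by auto
  have sum_insert: "(\<Sum>p\<in>insert a S. c p) = s + c a" "(\<Sum>p\<in>insert a S. c p ^ 2) = t + c a ^ 2"
    unfolding s_def t_def using insert by simp_all
  have "r = 0 \<or> r = 1 \<or> (\<exists>k. r = k + 2)" by presburger
  then consider "r = 0" | "r = 1" | k where "r = k + 2" by blast
  then show ?case
  proof cases
    case 2
    then show ?thesis using insert IH[of 1] by (simp add: esym_insert[of S a 0] esym_0 sum_insert)
  next
    case (3 k)
    have r: "real r * (real r - 1) / 2 = real (k+2) * real (k+1) / 2" "r - 2 = k" using 3 by simp_all
    have "fact r * esym r c (insert a S)
        = fact (k+2) * esym (k+2) c S + real (k+2) * c a * (fact (k+1) * esym (k+1) c S)"
      using 3 insert esym_insert[of S a "k+1" c] by (simp add: algebra_simps)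
    moreover have "s^(k+2) - (real (k+2) * real (k+1) / 2) * t * s^k \<le> fact (k+2) * esym (k+2) c S"
      using IH[of "k+2"] by simp
    moreover have "s^(k+1) - (real (k+1) * real k / 2) * t * s^(k-1) \<le> fact (k+1) * esym (k+1) c S"
      using IH[of "k+1"] by simp
    then have "real (k+2) * c a * (s^(k+1) - (real (k+1) * real k / 2) * t * s^(k-1))
        \<le> real (k+2) * c a * (fact (k+1) * esym (k+1) c S)"
      using a by (intro mult_left_mono) auto
    ultimately show ?thesis
      using esym_lower_step[OF s t a, of k] unfolding sum_insert r unfolding 3 by linarith
  qed (use insert in \<open>simp add: esym_0\<close>)
qed

lemma sum_inverse_squares_le:
  assumes "finite S" "\<And>p. p \<in> S \<Longrightarrow> p \<ge> (65::nat)"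
  shows "(\<Sum>p\<in>S. 1 / real p ^ 2) \<le> 1/64"
proof (cases "S = {}")
  case False
  define N where "N = Max S"
  have "N \<in> S" unfolding N_def using assms(1) False by (rule Max_in)
  then have N: "N \<ge> 64" using assms(2) by fastforce
  have "S \<subseteq> {64<..N}"
  proof
    fix p assume "p \<in> S"
    then show "p \<in> {64<..N}" using assms(2)[of p] Max_ge[OF assms(1), of p] by (simp add: N_def)
  qed
  then have "(\<Sum>p\<in>S. 1 / real p ^ 2) \<le> (\<Sum>p\<in>{64<..N}. 1 / real p ^ 2)"
    by (intro sum_mono2) auto
  also have "\<dots> \<le> (\<Sum>p\<in>{64<..N}. 1 / (real p * (real p - 1)))"
    by (intro sum_mono divide_left_mono) (auto simp: power2_eq_square intro!: mult_pos_pos)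
  also have "\<dots> = 1/64 - 1 / real N" using N by (simp add: sum_telescope_inverse)
  also have "\<dots> \<le> 1/64" by simp
  finally show ?thesis .
qed simp

text \<open>For primes \<open>p \<ge> 65\<close> and \<open>c p \<le> 2 / p\<close> we have \<open>\<Sum>c\<^sup>2 \<le> 1/16\<close>, which keeps the
  correction term of \<open>fact_mult_esym_ge\<close> below half of the main term.\<close>
lemma esym_ge_half_power:
  assumes "finite S"
    and c: "\<And>p. p \<in> S \<Longrightarrow> 0 \<le> c p \<and> c p \<le> 2 / real p"
    and r: "r \<ge> 2" and rs: "real r \<le> 4 * (\<Sum>p\<in>{p\<in>S. p \<ge> 65}. c p)"
  shows "(\<Sum>p\<in>{p\<in>S. p \<ge> 65}. c p) ^ r / (2 * fact r) \<le> esym r c S"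
proof -
  define S' where "S' = {p\<in>S. p \<ge> 65}"
  define s where "s = (\<Sum>p\<in>S'. c p)"
  define t where "t = (\<Sum>p\<in>S'. c p ^ 2)"
  have finS': "finite S'" unfolding S'_def using assms(1) by simp
  have s0: "s \<ge> 0" and t0: "t \<ge> 0" unfolding s_def t_def S'_def using c by (auto intro: sum_nonneg)
  have "t \<le> (\<Sum>p\<in>S'. 4 * (1 / real p ^ 2))"
    unfolding t_def
  proof (intro sum_mono)
    fix p assume "p \<in> S'"
    then have "c p ^ 2 \<le> (2 / real p) ^ 2" using c unfolding S'_def by (intro power_mono) auto
    then show "c p ^ 2 \<le> 4 * (1 / real p ^ 2)" by (simp add: power_divide)
  qed
  also have "\<dots> = 4 * (\<Sum>p\<in>S'. 1 / real p ^ 2)" by (simp add: sum_distrib_left)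
  also have "\<dots> \<le> 4 * (1/64)"
    using sum_inverse_squares_le[OF finS'] unfolding S'_def by (intro mult_left_mono) auto
  finally have t16: "t \<le> 1/16" by simp
  have "real r * (real r - 1) \<le> (4 * s) * (4 * s)"
    using rs unfolding s_def S'_def by (intro order_trans[OF mult_left_mono[of "real r - 1" "real r"]] mult_mono) auto
  then have "(real r * (real r - 1) / 2) * t \<le> (16 * s^2 / 2) * (1/16)"
    using t16 t0 s0 by (intro mult_mono) (auto simp: power2_eq_square)
  then have "(real r * (real r - 1) / 2) * t * s ^ (r - 2) \<le> (s^2 / 2) * s ^ (r - 2)"
    using s0 by (intro mult_right_mono) auto
  also have "(s^2 / 2) * s ^ (r - 2) = s ^ r / 2"
  proof -
    have "s ^ r = s ^ (2 + (r - 2))" using r by (simp only: le_add_diff_inverse)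
    also have "\<dots> = s^2 * s^(r - 2)" by (rule power_add)
    finally show ?thesis by simp
  qed
  finally have "s ^ r / 2 \<le> fact r * esym r c S'"
    using fact_mult_esym_ge[OF finS', of c r] c unfolding s_def t_def S'_def by auto
  also have "\<dots> \<le> fact r * esym r c S"
    using assms(1) c by (intro mult_left_mono esym_mono_set) (auto simp: S'_def)
  finally show ?thesis unfolding s_def S'_def by (simp add: field_simps)
qed

section \<open>Averaging the maximum\<close>

lemma pattern_expect_mono:
  assumes "\<And>A. A \<subseteq> P \<Longrightarrow> card A = r \<Longrightarrow> \<phi> A \<le> \<psi> A"
  shows "pattern_expect P r \<phi> \<le> pattern_expect P r \<psi>"
  unfolding pattern_expect_def
proof (rule sum_mono)
  fix A assume "A \<in> Pow P"
  then have "(if card A = r then 1 else 0) * \<phi> A \<le> (if card A = r then 1 else 0) * \<psi> A"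
    using assms by simp
  then show "pattern_prob P A * ((if card A = r then 1 else 0) * \<phi> A)
      \<le> pattern_prob P A * ((if card A = r then 1 else 0) * \<psi> A)"
    by (rule mult_left_mono[OF _ pattern_prob_nonneg])
qed

lemma pattern_expect_diff:
  "pattern_expect P r (\<lambda>A. \<phi> A - \<psi> A) = pattern_expect P r \<phi> - pattern_expect P r \<psi>"
  unfolding pattern_expect_def by (simp add: sum_subtractf algebra_simps)

lemma pattern_expect_scale: "pattern_expect P r (\<lambda>A. a * \<phi> A) = a * pattern_expect P r \<phi>"
  unfolding pattern_expect_def by (simp add: sum_distrib_left mult_ac)

lemma pattern_expect_sum:
  "pattern_expect P r (\<lambda>A. \<Sum>k\<in>K. \<phi> k A) = (\<Sum>k\<in>K. pattern_expect P r (\<phi> k))"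
  unfolding pattern_expect_def by (simp add: sum_distrib_left sum.swap[of _ _ K])

lemma pattern_prob_factor:
  assumes "finite P" "A \<subseteq> P" "\<And>p. p \<in> P \<Longrightarrow> p > 0"
  shows "pattern_prob P A = (\<Prod>p\<in>P. 1 - 1 / (real p + 1)) * (\<Prod>p\<in>A. 1 / real p)"
proof -
  have "1 / (real p + 1) = (1 - 1 / (real p + 1)) * (1 / real p)" if "p \<in> P" for p
    using assms(3)[OF that] by (simp add: field_simps)
  then have "pattern_prob P A = (\<Prod>p\<in>P. (1 - 1 / (real p + 1)) * (if p \<in> A then 1 / real p else 1))"
    unfolding pattern_prob_def by (intro prod.cong) auto
  also have "\<dots> = (\<Prod>p\<in>P. 1 - 1 / (real p + 1)) * (\<Prod>p\<in>{p\<in>P. p \<in> A}. 1 / real p)"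
    using assms(1) by (simp add: prod.distrib prod.inter_filter)
  also have "{p\<in>P. p \<in> A} = A" using assms(2) by auto
  finally show ?thesis .
qed

lemma pattern_expect_prod:
  assumes "finite P" "\<And>p. p \<in> P \<Longrightarrow> p > 0"
  shows "pattern_expect P r (\<lambda>A. \<Prod>p\<in>A. c p)
       = (\<Prod>p\<in>P. 1 - 1 / (real p + 1)) * esym r (\<lambda>p. c p / real p) P"
proof -
  let ?Q = "\<Prod>p\<in>P. 1 - 1 / (real p + 1)"
  have "pattern_expect P r (\<lambda>A. \<Prod>p\<in>A. c p)
      = (\<Sum>A\<in>Pow P. if card A = r then ?Q * (\<Prod>p\<in>A. c p / real p) else 0)"
    unfolding pattern_expect_def using assms
    by (intro sum.cong refl) (simp add: pattern_prob_factor prod.distrib[symmetric])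
  also have "\<dots> = (\<Sum>A\<in>{A. A \<subseteq> P \<and> card A = r}. ?Q * (\<Prod>p\<in>A. c p / real p))"
    using assms(1) by (simp add: sum.inter_filter[symmetric] Pow_def conj_commute)
  finally show ?thesis unfolding esym_def by (simp add: sum_distrib_left)
qed

lemma two_pow_card_filter:
  assumes "finite A"
  shows "(2::real) ^ card {p\<in>A. Q p} = (\<Prod>p\<in>A. if Q p then 2 else 1)"
  using prod.inter_filter[OF assms, of "\<lambda>_. 2::real" Q] by simp

lemma real_sqrt_prod: "sqrt (\<Prod>x\<in>A. f x) = (\<Prod>x\<in>A. sqrt (f x))"
  by (induction A rule: infinite_finite_induct) (auto simp: real_sqrt_mult)

text \<open>Since \<open>(\<Sum>a)\<^sup>2 \<le> M \<Sum>\<Sum>sqrt (a\<^sub>j a\<^sub>k)\<close>, the left-hand side is at most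
  \<open>(\<Sum>a)\<^sup>2 / \<Sum>\<Sum>sqrt (a\<^sub>j a\<^sub>k) \<le> M\<close>: a lower bound for a maximum that is linear in each \<open>a\<^sub>k\<close>
  and \<open>sqrt (a\<^sub>j a\<^sub>k)\<close>, hence can be averaged.\<close>
lemma max_ge_quadratic_form:
  fixes a :: "nat \<Rightarrow> real"
  assumes K: "finite K" "K \<noteq> {}" and a: "\<And>k. k \<in> K \<Longrightarrow> 0 < a k" "\<And>k. k \<in> K \<Longrightarrow> a k \<le> M"
  shows "2 * lam * (\<Sum>k\<in>K. a k) - lam^2 * (\<Sum>j\<in>K. \<Sum>k\<in>K. sqrt (a j * a k)) \<le> M"
proof -
  define T where "T = (\<Sum>k\<in>K. a k)"
  define D where "D = (\<Sum>j\<in>K. \<Sum>k\<in>K. sqrt (a j * a k))"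
  have D0: "D > 0" unfolding D_def using K a by (intro sum_pos) auto
  have sq: "a j * a k \<le> M * sqrt (a j * a k)" if "j \<in> K" "k \<in> K" for j k
  proof -
    have pos: "0 < a j * a k" using a that by simp
    have M: "0 \<le> M" using a that by (meson less_le_trans less_imp_le)
    have "a j * a k \<le> M * M" using a that M by (intro mult_mono) (auto intro: less_imp_le)
    then have "sqrt (a j * a k) \<le> sqrt (M * M)" by (rule real_sqrt_le_mono)
    then have "sqrt (a j * a k) \<le> M" using M by simp
    then have "sqrt (a j * a k) * sqrt (a j * a k) \<le> M * sqrt (a j * a k)"
      using pos by (intro mult_right_mono) auto
    then show ?thesis using pos by simp
  qed
  have "T^2 = (\<Sum>j\<in>K. \<Sum>k\<in>K. a j * a k)"
    unfolding T_def power2_eq_square by (simp add: sum_product)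
  also have "\<dots> \<le> (\<Sum>j\<in>K. \<Sum>k\<in>K. M * sqrt (a j * a k))"
    using sq by (intro sum_mono) auto
  also have "\<dots> = M * D" unfolding D_def by (simp add: sum_distrib_left)
  finally have TD: "T^2 \<le> M * D" .
  have "2 * lam * T - lam^2 * D \<le> T^2 / D"
  proof -
    have "0 \<le> (T - lam * D)^2 / D" using D0 by simp
    also have "(T - lam * D)^2 / D = T^2 / D - 2 * lam * T + lam^2 * D"
      using D0 by (simp add: power2_eq_square field_simps)
    finally show ?thesis by simp
  qed
  also have "T^2 / D \<le> M" using TD D0 by (simp add: pos_divide_le_eq)
  finally show ?thesis unfolding T_def D_def .
qed

definition weight :: "nat \<Rightarrow> nat \<Rightarrow> real" where
  "weight k p = (if real p < exp (2 ^ k) then 2 else 1)"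

lemma pattern_expect_Max_ge:
  fixes P K :: "nat set" and Y :: "real set" and lam :: real
  assumes P: "finite P" "\<And>p. p \<in> P \<Longrightarrow> p > 0"
    and K: "finite K" "K \<noteq> {}" and Y: "finite Y" "\<And>k. k \<in> K \<Longrightarrow> exp (2 ^ k) \<in> Y"
  shows "(\<Prod>p\<in>P. 1 - 1 / (real p + 1)) *
          (2 * lam * (\<Sum>k\<in>K. esym r (\<lambda>p. weight k p / real p) P / 2 ^ k)
           - lam^2 * (\<Sum>j\<in>K. \<Sum>k\<in>K. esym r (\<lambda>p. sqrt (weight j p * weight k p) / real p) P
                / sqrt (2 ^ j * 2 ^ k)))
    \<le> pattern_expect P r (\<lambda>A. Max ((\<lambda>y. 2 ^ card {p\<in>A. real p < y} / Log y) ` Y))"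
proof -
  define f where "f k A = (1 / 2 ^ k) * (\<Prod>p\<in>A. weight k p)" for k A
  define h where "h j k A = (1 / sqrt (2 ^ j * 2 ^ k)) * (\<Prod>p\<in>A. sqrt (weight j p * weight k p))" for j k A
  have "pattern_expect P r (\<lambda>A. 2 * lam * (\<Sum>k\<in>K. f k A) - lam^2 * (\<Sum>j\<in>K. \<Sum>k\<in>K. h j k A))
      \<le> pattern_expect P r (\<lambda>A. Max ((\<lambda>y. 2 ^ card {p\<in>A. real p < y} / Log y) ` Y))"
  proof (rule pattern_expect_mono)
    fix A assume "A \<subseteq> P"
    then have A: "finite A" using P(1) by (rule finite_subset)
    have f_eq: "f k A = 2 ^ card {p\<in>A. real p < exp (2 ^ k)} / Log (exp (2 ^ k))" for k
      unfolding f_def weight_def two_pow_card_filter[OF A] by (simp add: Log_def)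
    have "h j k A = sqrt (f j A * f k A)" for j k
      unfolding f_def h_def by (simp add: real_sqrt_mult real_sqrt_prod prod.distrib real_sqrt_divide)
    moreover have "0 < f k A" for k unfolding f_def weight_def by (intro mult_pos_pos prod_pos) auto
    moreover have "f k A \<le> Max ((\<lambda>y. 2 ^ card {p\<in>A. real p < y} / Log y) ` Y)" if "k \<in> K" for k
      unfolding f_eq using Y that by (intro Max_ge) auto
    ultimately show "2 * lam * (\<Sum>k\<in>K. f k A) - lam^2 * (\<Sum>j\<in>K. \<Sum>k\<in>K. h j k A)
        \<le> Max ((\<lambda>y. 2 ^ card {p\<in>A. real p < y} / Log y) ` Y)"
      using max_ge_quadratic_form[OF K] by simp
  qed
  moreover have "pattern_expect P r (\<lambda>A. 2 * lam * (\<Sum>k\<in>K. f k A) - lam^2 * (\<Sum>j\<in>K. \<Sum>k\<in>K. h j k A))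
      = (\<Prod>p\<in>P. 1 - 1 / (real p + 1)) *
          (2 * lam * (\<Sum>k\<in>K. esym r (\<lambda>p. weight k p / real p) P / 2 ^ k)
           - lam^2 * (\<Sum>j\<in>K. \<Sum>k\<in>K. esym r (\<lambda>p. sqrt (weight j p * weight k p) / real p) P
                / sqrt (2 ^ j * 2 ^ k)))"
    unfolding f_def h_def pattern_expect_diff pattern_expect_scale pattern_expect_sum
    by (simp add: pattern_expect_prod[OF P] sum_distrib_left right_diff_distrib mult_ac)
  ultimately show ?thesis by simp
qed

section \<open>The linear and the cross terms\<close>

lemma exp_shift_le_power:
  assumes r: "r \<ge> 1" and d: "\<bar>d\<bar> \<le> real r / 2" "d^2 \<le> 3 * real r"
  shows "real r ^ r * exp (d - 6) \<le> (real r + d) ^ r"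
proof -
  define v where "v = d / real r"
  have rpos: "real r > 0" using r by simp
  have v: "\<bar>v\<bar> \<le> 1/2" using d rpos by (simp add: v_def abs_divide divide_le_eq)
  then have "v - 2 * v^2 \<le> ln (1 + v)" using abs_ln_one_plus_x_minus_x_bound[OF v] by (simp add: abs_le_iff)
  moreover have "2 * real r * v^2 \<le> 6" "real r * v = d"
    using d rpos by (simp_all add: v_def power2_eq_square field_simps)
  ultimately have "d - 6 \<le> real r * ln (1 + v)"
    using mult_left_mono[of "v - 2 * v^2" "ln (1 + v)" "real r"] rpos by (simp add: algebra_simps)
  then have "exp (d - 6) \<le> exp (real r * ln (1 + v))" by simp
  also have "\<dots> = (1 + v) ^ r" using v by (simp add: abs_le_iff exp_of_nat_mult)
  finally have "real r ^ r * exp (d - 6) \<le> real r ^ r * (1 + v) ^ r" by (simp add: mult_left_mono)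
  also have "\<dots> = (real r + d) ^ r"
    using rpos by (simp add: v_def power_mult_distrib[symmetric] field_simps)
  finally show ?thesis .
qed

lemma power_le_exp_shift:
  fixes s u :: real
  assumes "0 \<le> s" "s \<le> real r + u" "r > 0"
  shows "s ^ r \<le> real r ^ r * exp u"
proof -
  have rp: "real r > 0" using assms by simp
  have "real r + u = real r * (1 + u / real r)" using rp by (simp add: field_simps)
  also have "\<dots> \<le> real r * exp (u / real r)" using rp by (intro mult_left_mono) auto
  finally have "s ^ r \<le> (real r * exp (u / real r)) ^ r" using assms by (intro power_mono) auto
  also have "\<dots> = real r ^ r * exp u"
    using rp by (simp add: power_mult_distrib exp_of_nat_mult[symmetric])
  finally show ?thesis .
qed

lemma exp_div_sqrt_le_power_div_fact:
  assumes "r \<ge> (1::nat)"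
  shows "exp (real r - 1) / sqrt (real r) \<le> real r ^ r / fact r"
proof -
  have rp: "real r > 0" using assms by simp
  have "ln (exp (real r - 1) / sqrt (real r)) = real r - 1 - ln (real r) / 2"
    using rp by (simp add: ln_div ln_sqrt)
  also have "\<dots> \<le> real r * ln (real r) - ln (fact r)" using ln_fact_le_stirling[OF assms] by linarith
  also have "\<dots> = ln (real r ^ r / fact r)"
    using rp by (simp add: ln_div ln_realpow)
  finally show ?thesis
    using rp by (subst (asm) ln_le_cancel_iff) (auto intro!: divide_pos_pos)
qed

lemma exp_neg_sum_le_prod:
  assumes "finite P" "\<And>p. p \<in> P \<Longrightarrow> p > 0"
  shows "exp (- (\<Sum>p\<in>P. 1 / real p)) \<le> (\<Prod>p\<in>P. 1 - 1 / (real p + 1))"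
proof -
  have "exp (- (\<Sum>p\<in>P. 1 / real p)) = (\<Prod>p\<in>P. exp (- (1 / real p)))"
    using assms(1) by (simp add: exp_sum[symmetric] sum_negf)
  also have "\<dots> \<le> (\<Prod>p\<in>P. 1 / (1 + 1 / real p))"
  proof (intro prod_mono conjI)
    fix p assume "p \<in> P"
    then have "1 / exp (1 / real p) \<le> 1 / (1 + 1 / real p)"
      using assms(2) by (intro divide_left_mono) (auto intro!: mult_pos_pos add_pos_nonneg)
    then show "exp (- (1 / real p)) \<le> 1 / (1 + 1 / real p)" by (simp add: exp_minus inverse_eq_divide)
  qed auto
  also have "\<dots> = (\<Prod>p\<in>P. 1 - 1 / (real p + 1))"
    using assms(2) by (intro prod.cong refl) (simp add: field_simps)
  finally show ?thesis .
qed

definition nat_dist :: "nat \<Rightarrow> nat \<Rightarrow> nat" where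
  "nat_dist j k = (if j \<le> k then k - j else j - k)"

lemma sum_power_le_geometric:
  fixes \<rho> :: real
  assumes "0 \<le> \<rho>" "\<rho> < 1" "finite D"
  shows "(\<Sum>d\<in>D. \<rho> ^ d) \<le> 1 / (1 - \<rho>)"
proof -
  define N where "N = Suc (Max (insert 0 D))"
  have "D \<subseteq> {..<N}" unfolding N_def using assms by (auto simp: le_imp_less_Suc)
  then have "(\<Sum>d\<in>D. \<rho> ^ d) \<le> (\<Sum>d<N. \<rho> ^ d)"
    using assms by (intro sum_mono2) auto
  also have "\<dots> = (1 - \<rho> ^ N) / (1 - \<rho>)" using assms by (simp add: sum_gp_strict)
  also have "\<dots> \<le> 1 / (1 - \<rho>)" using assms by (intro divide_right_mono) auto
  finally show ?thesis .
qed

lemma sum_power_nat_dist_le: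
  fixes \<rho> :: real
  assumes "0 \<le> \<rho>" "\<rho> < 1" "finite K"
  shows "(\<Sum>k\<in>K. \<rho> ^ nat_dist j k) \<le> 2 / (1 - \<rho>)"
proof -
  have "(\<Sum>k\<in>K. \<rho> ^ nat_dist j k) = (\<Sum>k\<in>K \<inter> {j..}. \<rho> ^ (k - j)) + (\<Sum>k\<in>K - {j..}. \<rho> ^ (j - k))"
    using assms(3) by (subst sum.Int_Diff[of _ _ "{j..}"]) (auto intro!: sum.cong simp: nat_dist_def)
  also have "(\<Sum>k\<in>K \<inter> {j..}. \<rho> ^ (k - j)) = (\<Sum>d\<in>(\<lambda>k. k - j) ` (K \<inter> {j..}). \<rho> ^ d)"
    by (subst sum.reindex) (auto simp: inj_on_def)
  also have "(\<Sum>k\<in>K - {j..}. \<rho> ^ (j - k)) = (\<Sum>d\<in>(\<lambda>k. j - k) ` (K - {j..}). \<rho> ^ d)"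
    by (subst sum.reindex) (auto simp: inj_on_def)
  finally show ?thesis
    using sum_power_le_geometric[OF assms(1,2), of "(\<lambda>k. k - j) ` (K \<inter> {j..})"]
      sum_power_le_geometric[OF assms(1,2), of "(\<lambda>k. j - k) ` (K - {j..})"] assms(3) by simp
qed

lemma prime_recip_sum_restrict:
  assumes "z \<le> x"
  shows "(\<Sum>p\<in>primes_below x. if real p < z then 1 / real p else 0) = prime_recip_sum z"
proof -
  have "{p\<in>primes_below x. real p < z} = primes_below z"
    using assms by (auto simp: primes_below_def)
  then show ?thesis unfolding prime_recip_sum_def by (simp add: sum.inter_filter[symmetric])
qed

lemma sum_weight_eq:
  assumes "exp (2 ^ k) \<le> x"
  shows "(\<Sum>p\<in>primes_below x. weight k p / real p) = prime_recip_sum x + prime_recip_sum (exp (2 ^ k))"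
proof -
  have "(\<Sum>p\<in>primes_below x. weight k p / real p)
      = (\<Sum>p\<in>primes_below x. 1 / real p + (if real p < exp (2 ^ k) then 1 / real p else 0))"
    unfolding weight_def by (intro sum.cong) auto
  then show ?thesis
    by (simp add: sum.distrib prime_recip_sum_restrict[OF assms] prime_recip_sum_def)
qed

lemma weight_div_bounds: "0 \<le> weight k p / real p \<and> weight k p / real p \<le> 2 / real p"
  unfolding weight_def by (auto simp: divide_right_mono)

lemma sum_weight_large_primes_ge:
  assumes "exp (2 ^ k) \<le> x"
  shows "prime_recip_sum x + prime_recip_sum (exp (2 ^ k)) - 2 * prime_recip_sum 65
    \<le> (\<Sum>p\<in>{p\<in>primes_below x. p \<ge> 65}. weight k p / real p)"
proof -
  let ?S = "{p\<in>primes_below x. p \<ge> 65}"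
  have "(\<Sum>p\<in>primes_below x - ?S. weight k p / real p) \<le> (\<Sum>p\<in>primes_below x - ?S. 2 * (1 / real p))"
    using weight_div_bounds by (intro sum_mono) simp
  also have "\<dots> \<le> (\<Sum>p\<in>primes_below 65. 2 * (1 / real p))"
    by (intro sum_mono2) (auto simp: primes_below_def)
  also have "\<dots> = 2 * prime_recip_sum 65" unfolding prime_recip_sum_def by (simp add: sum_distrib_left)
  finally have "(\<Sum>p\<in>primes_below x - ?S. weight k p / real p) \<le> 2 * prime_recip_sum 65" .
  moreover have "(\<Sum>p\<in>primes_below x. weight k p / real p)
      = (\<Sum>p\<in>primes_below x - ?S. weight k p / real p) + (\<Sum>p\<in>?S. weight k p / real p)"
    by (rule sum.subset_diff) auto
  ultimately show ?thesis using sum_weight_eq[OF assms] by linarith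
qed

lemma square_le_of_abs_le_sqrt_add:
  assumes "\<bar>d\<bar> \<le> sqrt L + B" "0 \<le> L" "2 * B^2 \<le> L" "L \<le> R"
  shows "d^2 \<le> 3 * R"
proof -
  have "d^2 \<le> (sqrt L + B)^2" using power_mono[OF assms(1), of 2] by simp
  also have "\<dots> = 2 * L + 2 * B^2 - (sqrt L - B)^2"
    using assms(2) by (simp add: power2_eq_square algebra_simps)
  also have "\<dots> \<le> 3 * R" using assms(3,4) zero_le_power2[of "sqrt L - B"] by linarith
  finally show ?thesis .
qed

lemma esym_linear_term_ge:
  fixes x L al B :: real and r k :: nat
  defines "B1 \<equiv> 2 * B + 2 * prime_recip_sum 65"
  assumes r: "real r = L + al * L" and L4: "L \<ge> 4" and al: "al \<ge> 0" and B0: "B \<ge> 0"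
    and Fx: "L - B \<le> prime_recip_sum x" and Fk: "real k * ln 2 - B \<le> prime_recip_sum (exp (2 ^ k))"
    and yx: "exp (2 ^ k) \<le> x" and k: "\<bar>real k * ln 2 - al * L\<bar> \<le> sqrt L"
    and L_large: "sqrt L + B1 \<le> L / 2" "2 * B1^2 \<le> L"
  shows "(real r ^ r / fact r) * exp (- (al * L)) * (exp (- B1 - 6) / 2)
     \<le> esym r (\<lambda>p. weight k p / real p) (primes_below x) / 2 ^ k"
proof -
  define P where "P = primes_below x"
  define s where "s = (\<Sum>p\<in>{p\<in>P. p \<ge> 65}. weight k p / real p)"
  define d where "d = real k * ln 2 - al * L - B1"
  have rL: "real r \<ge> L" using r al L4 by simp
  have r2: "r \<ge> 2" using rL L4 by linarith
  have B1: "B1 \<ge> 0" unfolding B1_def using B0 prime_recip_sum_nonneg[of 65] by simp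
  have s_ge: "real r + d \<le> s"
    using sum_weight_large_primes_ge[OF yx] Fx Fk r unfolding s_def P_def d_def B1_def by linarith
  have d_abs: "\<bar>d\<bar> \<le> sqrt L + B1" using k B1 unfolding d_def by (simp add: abs_le_iff)
  then have d_half: "\<bar>d\<bar> \<le> real r / 2" using L_large rL by linarith
  have d_sq: "d^2 \<le> 3 * real r"
    using d_abs L4 L_large(2) rL by (intro square_le_of_abs_le_sqrt_add) auto
  have "real r ^ r * exp (d - 6) \<le> (real r + d) ^ r"
    using r2 d_half d_sq by (intro exp_shift_le_power) auto
  also have "\<dots> \<le> s ^ r" using s_ge d_half by (intro power_mono) auto
  also have "s ^ r \<le> 2 * fact r * esym r (\<lambda>p. weight k p / real p) P"
    using esym_ge_half_power[of P "\<lambda>p. weight k p / real p" r] weight_div_bounds r2 s_ge d_half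
    unfolding s_def P_def by (simp add: field_simps)
  finally have "real r ^ r * exp (d - 6) / (2 * fact r) / 2 ^ k
      \<le> esym r (\<lambda>p. weight k p / real p) P / 2 ^ k"
    by (intro divide_right_mono) (simp_all add: field_simps)
  moreover have "(2::real) ^ k = exp (real k * ln 2)" by (simp add: exp_of_nat_mult)
  then have "exp (d - 6) / 2 ^ k = exp (- (al * L)) * exp (- B1 - 6)"
    unfolding d_def by (simp add: exp_diff[symmetric] exp_add[symmetric])
  ultimately show ?thesis unfolding P_def by (simp add: field_simps)
qed

text \<open>Between \<open>exp (2 ^ j)\<close> and \<open>exp (2 ^ k)\<close> the cross weight \<open>sqrt (weight j p * weight k p)\<close>
  is \<open>sqrt 2\<close>, so compared with the diagonal the cross terms decay like \<open>2 powr ((sqrt 2 - 3/2) * (k - j))\<close>.\<close>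
definition decay :: real where
  "decay = exp (ln 2 * (sqrt 2 - 3/2))"

lemma sqrt_two_lt: "sqrt (2::real) < 3/2"
proof -
  have "sqrt (2::real) < sqrt (9/4)" by (subst real_sqrt_less_iff) simp
  also have "sqrt (9/4::real) = 3/2" by (simp add: real_sqrt_divide)
  finally show ?thesis .
qed

lemma decay_bounds: "0 \<le> decay" "decay < 1"
  unfolding decay_def using sqrt_two_lt by (auto simp: mult_pos_neg)

lemma sum_sqrt_weight_eq:
  assumes "j \<le> k" "exp (2 ^ k) \<le> x"
  defines "a \<equiv> exp ((2::real) ^ j)" and "b \<equiv> exp ((2::real) ^ k)"
  shows "(\<Sum>p\<in>primes_below x. sqrt (weight j p * weight k p) / real p)
    = prime_recip_sum x + prime_recip_sum a + (sqrt 2 - 1) * (prime_recip_sum b - prime_recip_sum a)"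
proof -
  have ab: "a \<le> b" unfolding a_def b_def using assms(1) by simp
  then have ax: "a \<le> x" using assms(2) unfolding b_def by simp
  have "sqrt (weight j p * weight k p) / real p = 1 / real p + (if real p < a then 1 / real p else 0)
      + (sqrt 2 - 1) * ((if real p < b then 1 / real p else 0) - (if real p < a then 1 / real p else 0))" for p
    unfolding weight_def a_def[symmetric] b_def[symmetric] using ab
    by (auto simp: real_sqrt_mult[symmetric] field_simps)
  then show ?thesis using ab
    by (simp add: sum.distrib sum_subtractf sum_distrib_left[symmetric] prime_recip_sum_restrict ax
        assms(2)[folded b_def] prime_recip_sum_def)
qed

lemma sqrt_two_pow_mult: "sqrt ((2::real) ^ j * 2 ^ k) = exp ((real j + real k) * ln 2 / 2)"
proof -
  have "(2::real) ^ j * 2 ^ k = exp ((real j + real k) * ln 2)"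
    by (simp add: exp_of_nat_mult distrib_right exp_add)
  moreover have "sqrt (exp t) = exp (t / 2)" for t :: real
    by (rule real_sqrt_unique) (simp_all add: power2_eq_square exp_add[symmetric])
  ultimately show ?thesis by simp
qed

lemma esym_cross_term_le:
  fixes x L al B :: real and r j k :: nat
  assumes r: "real r = L + al * L" "r \<ge> 1" and jk: "j \<le> k" and B0: "B \<ge> 0"
    and Fx: "prime_recip_sum x \<le> L + B"
    and Fj: "\<bar>prime_recip_sum (exp (2 ^ j)) - real j * ln 2\<bar> \<le> B"
    and Fk: "\<bar>prime_recip_sum (exp (2 ^ k)) - real k * ln 2\<bar> \<le> B"
    and yx: "exp (2 ^ k) \<le> x"
  shows "esym r (\<lambda>p. sqrt (weight j p * weight k p) / real p) (primes_below x) / sqrt (2 ^ j * 2 ^ k)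
     \<le> (real r ^ r / fact r) * exp (- (al * L)) * exp (4 * B) * decay ^ (k - j)"
proof -
  define a where "a = exp ((2::real) ^ j)"
  define b where "b = exp ((2::real) ^ k)"
  define v where "v = real j * ln 2 - al * L + (sqrt 2 - 1) * (real (k - j) * ln 2) + 4 * B"
  define s where "s = (\<Sum>p\<in>primes_below x. sqrt (weight j p * weight k p) / real p)"
  have "s = prime_recip_sum x + prime_recip_sum a + (sqrt 2 - 1) * (prime_recip_sum b - prime_recip_sum a)"
    unfolding s_def a_def b_def by (rule sum_sqrt_weight_eq[OF jk yx])
  moreover have "(sqrt 2 - 1) * (prime_recip_sum b - prime_recip_sum a)
      \<le> (sqrt 2 - 1) * (real (k - j) * ln 2) + 2 * B"
  proof -
    have "prime_recip_sum b - prime_recip_sum a \<le> real (k - j) * ln 2 + 2 * B"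
      using Fj Fk jk unfolding a_def b_def by (simp add: abs_le_iff of_nat_diff algebra_simps)
    then have "(sqrt 2 - 1) * (prime_recip_sum b - prime_recip_sum a) \<le> (sqrt 2 - 1) * (real (k - j) * ln 2 + 2 * B)"
      by (intro mult_left_mono) auto
    also have "\<dots> \<le> (sqrt 2 - 1) * (real (k - j) * ln 2) + 2 * B"
      using sqrt_two_lt B0 by (simp add: distrib_left mult_left_le_one_le)
    finally show ?thesis .
  qed
  ultimately have s_le: "s \<le> real r + v"
    using Fx Fj r unfolding a_def v_def by (simp add: abs_le_iff)
  have "fact r * esym r (\<lambda>p. sqrt (weight j p * weight k p) / real p) (primes_below x) \<le> s ^ r"
    unfolding s_def by (rule fact_mult_esym_le) (auto simp: weight_def)
  also have "\<dots> \<le> real r ^ r * exp v"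
    using r(2) s_le unfolding s_def by (intro power_le_exp_shift) (auto simp: weight_def intro!: sum_nonneg)
  finally have E: "esym r (\<lambda>p. sqrt (weight j p * weight k p) / real p) (primes_below x)
      \<le> real r ^ r / fact r * exp v"
    by (simp add: field_simps)
  have "decay ^ (k - j) = exp (real (k - j) * (ln 2 * (sqrt 2 - 3/2)))"
    unfolding decay_def by (simp add: exp_of_nat_mult)
  moreover have "v - (real j + real k) * ln 2 / 2
      = - (al * L) + 4 * B + real (k - j) * (ln 2 * (sqrt 2 - 3/2))"
    using jk unfolding v_def by (simp add: of_nat_diff field_simps)
  ultimately have "exp v / sqrt (2 ^ j * 2 ^ k)
      = exp (- (al * L)) * exp (4 * B) * decay ^ (k - j)"
    by (simp add: sqrt_two_pow_mult exp_diff[symmetric] exp_add[symmetric])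
  with E show ?thesis
    by (simp add: divide_right_mono field_simps)
qed

lemma esym_cross_term_le_sym:
  fixes x L al B :: real and r j k :: nat
  assumes r: "real r = L + al * L" "r \<ge> 1" and B0: "B \<ge> 0"
    and Fx: "prime_recip_sum x \<le> L + B"
    and Fj: "\<bar>prime_recip_sum (exp (2 ^ j)) - real j * ln 2\<bar> \<le> B"
    and Fk: "\<bar>prime_recip_sum (exp (2 ^ k)) - real k * ln 2\<bar> \<le> B"
    and yx: "exp (2 ^ j) \<le> x" "exp (2 ^ k) \<le> x"
  shows "esym r (\<lambda>p. sqrt (weight j p * weight k p) / real p) (primes_below x) / sqrt (2 ^ j * 2 ^ k)
     \<le> (real r ^ r / fact r) * exp (- (al * L)) * exp (4 * B) * decay ^ nat_dist j k"
proof (cases "j \<le> k")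
  case True
  then show ?thesis using esym_cross_term_le[OF r True B0 Fx Fj Fk yx(2)] by (simp add: nat_dist_def)
next
  case False
  then have kj: "k \<le> j" by simp
  show ?thesis using False esym_cross_term_le[OF r kj B0 Fx Fk Fj yx(1)]
    by (simp add: nat_dist_def mult.commute)
qed

definition window :: "real \<Rightarrow> real \<Rightarrow> nat set" where
  "window c h = {k. \<bar>real k * ln 2 - c\<bar> \<le> h}"

lemma window_eq_atLeastAtMost:
  assumes "0 \<le> h" "h \<le> c"
  shows "window c h = {nat \<lceil>(c - h) / ln 2\<rceil>..nat \<lfloor>(c + h) / ln 2\<rfloor>}"
proof -
  have l2: "ln (2::real) > 0" by simp
  have "nat \<lceil>(c - h) / ln 2\<rceil> \<le> k \<longleftrightarrow> c - h \<le> real k * ln 2" for k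
    using assms l2 by (simp add: nat_le_iff ceiling_le_iff divide_le_eq)
  moreover have "k \<le> nat \<lfloor>(c + h) / ln 2\<rfloor> \<longleftrightarrow> real k * ln 2 \<le> c + h" for k
  proof -
    have "0 \<le> \<lfloor>(c + h) / ln 2\<rfloor>" using assms l2 by simp
    then have "k \<le> nat \<lfloor>(c + h) / ln 2\<rfloor> \<longleftrightarrow> real k \<le> (c + h) / ln 2"
      by (simp add: le_nat_iff le_floor_iff)
    then show ?thesis using l2 by (simp add: le_divide_eq)
  qed
  ultimately show ?thesis unfolding window_def by (auto simp: abs_le_iff)
qed

lemma card_window_ge:
  assumes "1 \<le> h" "h \<le> c"
  shows "h \<le> real (card (window c h))"
proof -
  define a where "a = (c - h) / ln 2"
  define b where "b = (c + h) / ln 2"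
  have l2: "ln (2::real) > 0" "ln (2::real) < 1" using ln_2_less_1 by auto
  have a0: "a \<ge> 0" unfolding a_def using assms l2 by simp
  have "b - a = 2 * h / ln 2" unfolding a_def b_def by (simp add: field_simps)
  also have "\<dots> \<ge> 2 * h" using l2 assms by (simp add: le_divide_eq)
  finally have ba: "b - a \<ge> 2 * h" .
  have ceil: "real (nat \<lceil>a\<rceil>) \<le> a + 1" using a0 by (simp add: ceiling_correct)
  have floor: "real (nat \<lfloor>b\<rfloor>) \<ge> b - 1" using a0 ba assms by simp
  have "nat \<lceil>a\<rceil> \<le> Suc (nat \<lfloor>b\<rfloor>)" using ceil floor ba assms by linarith
  then have "real (card {nat \<lceil>a\<rceil>..nat \<lfloor>b\<rfloor>}) = real (nat \<lfloor>b\<rfloor>) + 1 - real (nat \<lceil>a\<rceil>)"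
    by (simp add: of_nat_diff)
  also have "\<dots> \<ge> h" using ceil floor ba assms by linarith
  finally show ?thesis using window_eq_atLeastAtMost[of h c] assms unfolding a_def b_def by simp
qed

lemma Log2_exp_two_pow:
  assumes "1 \<le> real k * ln 2"
  shows "Log2 (exp ((2::real) ^ k)) = real k * ln 2"
  using assms unfolding Log2_def Log_def by (simp add: ln_realpow)

lemma Yset_eq_window:
  assumes L: "Log2 x = L" and window: "4 \<le> al * L - sqrt L"
  shows "Yset x al = (\<lambda>k. exp ((2::real) ^ k)) ` window (al * L) (sqrt L)"
proof (intro equalityI subsetI)
  fix y assume "y \<in> Yset x al"
  then have y: "y > 0" "\<bar>Log2 y - al * L\<bar> \<le> sqrt L" "Log2 y / ln 2 \<in> \<int>"
    unfolding Yset_def L by auto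
  then obtain n where n: "Log2 y = of_int n * ln 2" by (auto elim!: Ints_cases simp: divide_eq_eq)
  have big: "Log2 y \<ge> 4" using y(2) window by (simp add: abs_le_iff)
  then have ln_Log: "4 \<le> ln (Log y)" unfolding Log2_def Log_def[of "Log y"] by (simp add: max_def split: if_splits)
  have "0 < Log y" unfolding Log_def by simp
  moreover have "0 < ln (Log y)" using ln_Log by linarith
  ultimately have "1 < Log y" using ln_gt_zero_iff by blast
  then have Log_y: "Log2 y = ln (Log y)" "1 < Log y"
    using ln_Log unfolding Log2_def Log_def[of "Log y"] by auto
  then have "Log y = ln y" unfolding Log_def by simp
  have "0 < real_of_int n * ln 2" using n big by linarith
  then have "n > 0" by (simp add: zero_less_mult_iff)
  define k where "k = nat n"
  have kn: "Log2 y = real k * ln 2" unfolding k_def using n \<open>n > 0\<close> by simp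
  have "ln y = exp (real k * ln 2)" using Log_y \<open>Log y = ln y\<close> kn by simp
  also have "\<dots> = 2 ^ k" by (simp add: exp_of_nat_mult)
  finally have "y = exp (2 ^ k)" using y(1) by (metis exp_ln)
  moreover have "k \<in> window (al * L) (sqrt L)" using y(2) kn by (simp add: window_def)
  ultimately show "y \<in> (\<lambda>k. exp ((2::real) ^ k)) ` window (al * L) (sqrt L)" by blast
next
  fix y assume "y \<in> (\<lambda>k. exp ((2::real) ^ k)) ` window (al * L) (sqrt L)"
  then obtain k where k: "\<bar>real k * ln 2 - al * L\<bar> \<le> sqrt L" "y = exp (2 ^ k)"
    by (auto simp: window_def)
  then have "Log2 y = real k * ln 2" using window Log2_exp_two_pow by (simp add: abs_le_iff)
  then show "y \<in> Yset x al" unfolding Yset_def L using k by auto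
qed

lemma ln_ln_bounds_of_exp_exp_le:
  assumes "1 \<le> a" "exp (exp a) \<le> x"
  shows "3 \<le> x" "a \<le> ln (ln x)" "Log2 x = ln (ln x)"
proof -
  have "exp (1::real) \<ge> 2" using exp_ge_add_one_self[of 1] by simp
  then have "exp (exp (1::real)) \<ge> 3" using exp_ge_add_one_self[of "exp 1"] by linarith
  moreover have "exp (exp 1) \<le> exp (exp a)" using assms(1) by simp
  ultimately show "3 \<le> x" using assms(2) by linarith
  have "exp a \<le> ln x" using assms(2) by (metis exp_gt_zero exp_le_cancel_iff exp_ln less_le_trans)
  then show a: "a \<le> ln (ln x)" by (metis exp_gt_zero exp_le_cancel_iff exp_ln less_le_trans)
  then have "1 \<le> ln x" "1 \<le> ln (ln x)" using assms(1) exp_ge_add_one_self[of a] \<open>exp a \<le> ln x\<close>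
    by linarith+
  then show "Log2 x = ln (ln x)" unfolding Log2_def Log_def by simp
qed

definition mertens_B :: real where
  "mertens_B = mertens_const + 2"

text \<open>\<open>mertens_B1\<close> also absorbs the primes below 65, which \<open>esym_ge_half_power\<close> discards.\<close>
definition mertens_B1 :: real where
  "mertens_B1 = 2 * mertens_B + 2 * prime_recip_sum 65"

definition c_linear :: real where
  "c_linear = exp (- mertens_B1 - 6) / 2"

definition c_cross :: real where
  "c_cross = 2 * exp (4 * mertens_B) / (1 - decay)"

definition prop_const :: real where
  "prop_const = exp (- mertens_B - 1) / sqrt 2 * (c_linear^2 / c_cross)"

definition L_threshold :: "real \<Rightarrow> real" where
  "L_threshold \<epsilon> = max (max 16 (4 / \<epsilon>^2)) (max (4 * mertens_B1) (2 * mertens_B1^2))"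

lemma mertens_B_nonneg: "0 \<le> mertens_B"
  using mertens_const_pos unfolding mertens_B_def by simp

lemma c_linear_pos: "0 < c_linear" and c_cross_pos: "0 < c_cross" and prop_const_pos: "0 < prop_const"
  using decay_bounds unfolding prop_const_def c_linear_def c_cross_def by simp_all

lemma linear_minus_quadratic_ge:
  fixes W T1 T2 c1 c2 :: real
  assumes "0 < c1" "0 < c2" "W * c1 \<le> T1" "T2 \<le> W * c2"
  shows "W * (c1^2 / c2) \<le> 2 * (c1 / c2) * T1 - (c1 / c2)^2 * T2"
proof -
  have "2 * (c1 / c2) * (W * c1) \<le> 2 * (c1 / c2) * T1" using assms by (intro mult_left_mono) auto
  moreover have "(c1 / c2)^2 * T2 \<le> (c1 / c2)^2 * (W * c2)" using assms by (intro mult_left_mono) auto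
  moreover have "2 * (c1 / c2) * (W * c1) - (c1 / c2)^2 * (W * c2) = W * (c1^2 / c2)"
    using assms by (simp add: field_simps power2_eq_square)
  ultimately show ?thesis by linarith
qed

locale window_setting =
  fixes eps x :: real and r :: nat
  assumes eps: "0 < eps" and x3: "3 \<le> x" and L_large: "L_threshold eps \<le> ln (ln x)"
    and r_range: "(1 + eps) * ln (ln x) \<le> real r" "real r \<le> (2 - eps) * ln (ln x)"
begin

definition L :: real where "L = ln (ln x)"

definition al :: real where "al = real r / L - 1"

definition K :: "nat set" where "K = window (al * L) (sqrt L)"

definition V :: real where "V = (real r ^ r / fact r) * exp (- (al * L))"

lemma L_ge: "16 \<le> L" "4 / eps^2 \<le> L" "4 * mertens_B1 \<le> L" "2 * mertens_B1^2 \<le> L"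
  using L_large unfolding L_def L_threshold_def by auto

lemma sqrt_L_ge: "4 \<le> sqrt L"
  using real_sqrt_le_mono[OF L_ge(1)] by simp

lemma eps_L_ge: "2 * sqrt L \<le> eps * L"
proof -
  have "2 / eps \<le> sqrt L"
    using real_sqrt_le_mono[OF L_ge(2)] eps by (simp add: real_sqrt_divide)
  then have "2 \<le> eps * sqrt L" using eps by (simp add: field_simps)
  then have "2 * sqrt L \<le> (eps * sqrt L) * sqrt L" using sqrt_L_ge L_ge(1) by (intro mult_right_mono) auto
  also have "\<dots> = eps * L" using L_ge(1) by (simp add: mult.assoc)
  finally show ?thesis .
qed

lemma r_eq: "real r = L + al * L"
  using L_ge(1) unfolding al_def by (simp add: field_simps)

lemma al_bounds: "eps \<le> al" "al \<le> 1 - eps"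
  using r_range L_ge(1) unfolding al_def L_def[symmetric] by (simp_all add: field_simps)

lemma window_inside: "sqrt L \<le> al * L - sqrt L" "al * L + sqrt L \<le> L - sqrt L"
proof -
  have "eps * L \<le> al * L" "al * L \<le> (1 - eps) * L"
    using al_bounds L_ge(1) by (simp_all add: mult_right_mono)
  then show "sqrt L \<le> al * L - sqrt L" "al * L + sqrt L \<le> L - sqrt L"
    using eps_L_ge by (simp_all add: algebra_simps)
qed

lemma r_bounds: "L \<le> real r" "real r \<le> 2 * L" "1 \<le> r"
proof -
  have "0 \<le> al * L" "al * L \<le> L" using al_bounds eps L_ge(1) by (auto intro: mult_right_le_one_le)
  then show "L \<le> real r" "real r \<le> 2 * L" using r_eq by linarith+
  then show "1 \<le> r" using L_ge(1) by linarith
qed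

lemma Log2_x: "Log2 x = L"
proof -
  have "1 \<le> ln x" using L_ge(1) x3 unfolding L_def by (smt (verit) ln_le_zero_iff ln_gt_zero)
  then show ?thesis using L_ge(1) unfolding Log2_def Log_def L_def by simp
qed

lemma K_finite: "finite K" and card_K_ge: "sqrt L \<le> real (card K)" and K_nonempty: "K \<noteq> {}"
proof -
  show "finite K" unfolding K_def using window_inside sqrt_L_ge
    by (subst window_eq_atLeastAtMost) simp_all
  show card: "sqrt L \<le> real (card K)" unfolding K_def
    using window_inside sqrt_L_ge by (intro card_window_ge) simp_all
  then have "0 < real (card K)" using sqrt_L_ge by linarith
  then show "K \<noteq> {}" by auto
qed

lemma Yset_eq: "Yset x al = (\<lambda>k. exp (2 ^ k)) ` K"
  unfolding K_def using Log2_x window_inside sqrt_L_ge by (intro Yset_eq_window) simp_all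

lemma prime_recip_sum_x: "\<bar>prime_recip_sum x - L\<bar> \<le> mertens_B"
  using mertens_second[OF x3] unfolding mertens_B_def L_def by simp

lemma K_elem:
  assumes "k \<in> K"
  shows "\<bar>real k * ln 2 - al * L\<bar> \<le> sqrt L" "exp (2 ^ k) \<le> x"
    "\<bar>prime_recip_sum (exp (2 ^ k)) - real k * ln 2\<bar> \<le> mertens_B"
proof -
  show k: "\<bar>real k * ln 2 - al * L\<bar> \<le> sqrt L" using assms unfolding K_def window_def by simp
  have two_pow: "(2::real) ^ k = exp (real k * ln 2)" by (simp add: exp_of_nat_mult)
  have "real k * ln 2 \<le> L" using k window_inside by (simp add: abs_le_iff)
  then have "(2::real) ^ k \<le> exp L" unfolding two_pow by simp
  also have "exp L = ln x" using x3 unfolding L_def by simp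
  finally have "(2::real) ^ k \<le> ln x" .
  then show "exp (2 ^ k) \<le> x" using x3 by (metis exp_le_cancel_iff exp_ln less_le_trans zero_less_numeral)
  have "real k * ln 2 \<ge> 4" using k window_inside sqrt_L_ge by (simp add: abs_le_iff)
  then have "k \<ge> 1" by (cases k) auto
  then have "(2::real) ^ k \<ge> 2" by (metis power_one_right power_increasing one_le_numeral)
  then have "exp ((2::real) ^ k) \<ge> 3" using exp_ge_add_one_self[of "(2::real)^k"] by linarith
  then show "\<bar>prime_recip_sum (exp (2 ^ k)) - real k * ln 2\<bar> \<le> mertens_B"
    using mertens_second[of "exp (2 ^ k)"] unfolding mertens_B_def by (simp add: ln_realpow)
qed

lemma linear_terms_ge:
  "real (card K) * V * c_linear
    \<le> (\<Sum>k\<in>K. esym r (\<lambda>p. weight k p / real p) (primes_below x) / 2 ^ k)"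
  unfolding mult.assoc[of "real (card K)"] mult.commute[of V]
proof (rule sum_bounded_below)
  fix k assume "k \<in> K"
  show "c_linear * V \<le> esym r (\<lambda>p. weight k p / real p) (primes_below x) / 2 ^ k"
    unfolding c_linear_def V_def mertens_B1_def
    using esym_linear_term_ge[OF r_eq _ _ mertens_B_nonneg _ _ K_elem(2)[OF \<open>k \<in> K\<close>] K_elem(1)[OF \<open>k \<in> K\<close>]]
      L_ge window_inside sqrt_L_ge al_bounds eps prime_recip_sum_x K_elem(3)[OF \<open>k \<in> K\<close>]
    unfolding mertens_B1_def by (simp add: abs_le_iff mult_ac)
qed

lemma cross_terms_le:
  "(\<Sum>j\<in>K. \<Sum>k\<in>K. esym r (\<lambda>p. sqrt (weight j p * weight k p) / real p) (primes_below x)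
      / sqrt (2 ^ j * 2 ^ k)) \<le> real (card K) * V * c_cross"
proof -
  have "(\<Sum>j\<in>K. \<Sum>k\<in>K. esym r (\<lambda>p. sqrt (weight j p * weight k p) / real p) (primes_below x)
      / sqrt (2 ^ j * 2 ^ k)) \<le> (\<Sum>j\<in>K. \<Sum>k\<in>K. V * exp (4 * mertens_B) * decay ^ nat_dist j k)"
    using prime_recip_sum_x K_elem
    by (intro sum_mono esym_cross_term_le_sym[OF r_eq r_bounds(3) mertens_B_nonneg, folded V_def])
      (simp_all add: abs_le_iff V_def mult_ac)
  also have "\<dots> = (\<Sum>j\<in>K. V * exp (4 * mertens_B) * (\<Sum>k\<in>K. decay ^ nat_dist j k))"
    by (simp add: sum_distrib_left)
  also have "\<dots> \<le> (\<Sum>j\<in>K. V * exp (4 * mertens_B) * (2 / (1 - decay)))"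
    using decay_bounds K_finite by (intro sum_mono mult_left_mono sum_power_nat_dist_le) (auto simp: V_def)
  also have "\<dots> = real (card K) * V * c_cross" unfolding c_cross_def by (simp add: field_simps)
  finally show ?thesis .
qed

lemma weighted_card_K_ge:
  "exp (- mertens_B - 1) / sqrt 2 \<le> (\<Prod>p\<in>primes_below x. 1 - 1 / (real p + 1)) * (real (card K) * V)"
proof -
  have "exp (- (L + mertens_B)) \<le> exp (- prime_recip_sum x)"
    using prime_recip_sum_x by (simp add: abs_le_iff)
  also have "\<dots> \<le> (\<Prod>p\<in>primes_below x. 1 - 1 / (real p + 1))"
    unfolding prime_recip_sum_def
    by (rule exp_neg_sum_le_prod[OF finite_primes_below]) (auto simp: primes_below_def prime_gt_0_nat)
  finally have Q: "exp (- (L + mertens_B)) \<le> (\<Prod>p\<in>primes_below x. 1 - 1 / (real p + 1))" .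
  have "exp (real r - 1) / sqrt (real r) * exp (- (al * L)) * sqrt L
      \<le> (real r ^ r / fact r) * exp (- (al * L)) * real (card K)"
    using exp_div_sqrt_le_power_div_fact[OF r_bounds(3)] card_K_ge L_ge(1) by (intro mult_mono) auto
  then have W: "exp (real r - 1) / sqrt (real r) * exp (- (al * L)) * sqrt L \<le> real (card K) * V"
    unfolding V_def by (simp add: mult_ac)
  have "exp (- (L + mertens_B)) * exp (real r - 1) * exp (- (al * L)) = exp (- mertens_B - 1)"
    using r_eq by (simp add: exp_add[symmetric])
  then have E: "exp (- (L + mertens_B)) * (exp (real r - 1) / sqrt (real r) * exp (- (al * L)) * sqrt L)
      = exp (- mertens_B - 1) * (sqrt L / sqrt (real r))"
    by (simp add: divide_inverse ac_simps)
  have "1 / sqrt 2 \<le> sqrt L / sqrt (real r)"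
    using r_bounds L_ge(1) by (simp add: field_simps real_sqrt_mult[symmetric])
  then have "exp (- mertens_B - 1) / sqrt 2 \<le> exp (- mertens_B - 1) * (sqrt L / sqrt (real r))"
    using mult_left_mono[of "1 / sqrt 2" "sqrt L / sqrt (real r)" "exp (- mertens_B - 1)"] by simp
  also have "\<dots> \<le> exp (- (L + mertens_B)) * (real (card K) * V)"
    unfolding E[symmetric] using W by (intro mult_left_mono) auto
  also have "\<dots> \<le> (\<Prod>p\<in>primes_below x. 1 - 1 / (real p + 1)) * (real (card K) * V)"
    using Q by (intro mult_right_mono) (auto simp: V_def)
  finally show ?thesis .
qed

theorem expectation_ge:
  "prop_const \<le> (\<integral>w. (if omega (n_lt w x) = r then 1 else 0) *
                  Max ((\<lambda>y. real (tau (n_lt w y)) / Log y) ` Yset x al) \<partial>model)"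
proof -
  define Q where "Q = (\<Prod>p\<in>primes_below x. 1 - 1 / (real p + 1))"
  define lam where "lam = c_linear / c_cross"
  have Q0: "0 \<le> Q" unfolding Q_def by (intro prod_nonneg) (auto simp: field_simps)
  have "prop_const \<le> Q * (real (card K) * V) * (c_linear^2 / c_cross)"
    using mult_right_mono[OF weighted_card_K_ge, of "c_linear^2 / c_cross"] c_cross_pos
    unfolding prop_const_def Q_def by simp
  also have "\<dots> \<le> Q * (2 * lam * (\<Sum>k\<in>K. esym r (\<lambda>p. weight k p / real p) (primes_below x) / 2 ^ k)
      - lam^2 * (\<Sum>j\<in>K. \<Sum>k\<in>K. esym r (\<lambda>p. sqrt (weight j p * weight k p) / real p) (primes_below x)
          / sqrt (2 ^ j * 2 ^ k)))"
    using mult_left_mono[OF linear_minus_quadratic_ge[OF c_linear_pos c_cross_pos linear_terms_ge cross_terms_le] Q0]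
    unfolding lam_def by (simp add: mult.assoc)
  also have "\<dots> \<le> pattern_expect (primes_below x) r
      (\<lambda>A. Max ((\<lambda>y. 2 ^ card {p\<in>A. real p < y} / Log y) ` Yset x al))"
    unfolding Q_def using K_finite K_nonempty Yset_eq
    by (intro pattern_expect_Max_ge finite_primes_below) (auto simp: primes_below_def prime_gt_0_nat)
  also have "\<dots> = (\<integral>w. (if omega (n_lt w x) = r then 1 else 0) *
                  Max ((\<lambda>y. real (tau (n_lt w y)) / Log y) ` Yset x al) \<partial>model)"
    using K_finite K_elem(2) unfolding Yset_eq by (intro expectation_eq_sum_patterns[symmetric]) auto
  finally show ?thesis .
qed

end

theorem proposition3p3:
  fixes \<epsilon> :: real
  assumes "\<epsilon> > 0"
  shows "\<exists>C>0. \<exists>X0. \<forall>x\<ge>X0. \<forall>r::nat.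
           (1 + \<epsilon>) * Log2 x \<le> real r \<and> real r \<le> (2 - \<epsilon>) * Log2 x \<longrightarrow>
           (let \<alpha> = real r / Log2 x - 1 in
             (\<integral>w. (if omega (n_lt w x) = r then 1 else 0) *
                  Max ((\<lambda>y. real (tau (n_lt w y)) / Log y) ` Yset x \<alpha>) \<partial>model) \<ge> C)"
proof (intro exI conjI allI impI)
  fix x :: real and r :: nat
  assume x: "exp (exp (L_threshold \<epsilon>)) \<le> x"
    and r: "(1 + \<epsilon>) * Log2 x \<le> real r \<and> real r \<le> (2 - \<epsilon>) * Log2 x"
  have "1 \<le> L_threshold \<epsilon>" unfolding L_threshold_def by simp
  note x_large = ln_ln_bounds_of_exp_exp_le[OF this x]
  interpret window_setting \<epsilon> x r
    using assms x_large r by unfold_locales simp_all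
  show "(let \<alpha> = real r / Log2 x - 1 in
          (\<integral>w. (if omega (n_lt w x) = r then 1 else 0) *
             Max ((\<lambda>y. real (tau (n_lt w y)) / Log y) ` Yset x \<alpha>) \<partial>model) \<ge> prop_const)"
    using expectation_ge unfolding Let_def Log2_x al_def by simp
qed (rule prop_const_pos)

end
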